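(* Let $\Delta t>0$ be fixed and consider a diagonally implicit, globally stiffly accurate (GSA) $s$-stage IMEX-RK scheme that is either of type A or of type CK, applied to the isentropic Euler system on $\mathbb{T}^d$ in the time semi-discrete form below. Suppose the data at time $t^n$ are well prepared, i.e. $$\rho^n=\rho^n_{(0)}+\varepsilon^2\rho^n_{(2)},\qquad \mathbf{u}^n=\mathbf{u}^n_{(0)}+\varepsilon\mathbf{u}^n_{(1)},$$ with $\rho^n_{(0)}>0$, $\rho^n_{(2)}$, $\mathbf{u}^n_{(0)}$, $\mathbf{u}^n_{(1)}$ smooth and independent of $\varepsilon$, $\nabla\rho^n_{(0)}=0$ and $\nabla\cdot\mathbf{u}^n_{(0)}=0$, and put $\mathbf{q}^n=\rho^n\mathbf{u}^n$. Suppose that for all sufficiently small $\varepsilon>0$ the stage values $\rho^k,\mathbf{q}^k$ ($k=1,\dots,s$) exist, are positive in density, and admit expansions $$f=f_{(0)}+\varepsilon f_{(1)}+\varepsilon^2 f_{(2)}+r_\varepsilon,$$ with coefficients $f_{(i)}$ smooth and independent of $\varepsilon$ and $r_\varepsilon=o(\varepsilon^2)$ in $C^1(\mathbb{T}^d)$ as $\varepsilon\to0$ (for $f\in\{\rho^k,\mathbf{u}^k\}$, $\mathbf{u}^k=\mathbf{q}^k/\rho^k$). Then for every $k=1,\dots,s$: (i) $\rho^k_{(0)}=\rho^n_{(0)}$ (in particular spatially constant) and $\rho^k_{(1)}$ is spatially constant; (ii) $\nabla\cdot\mathbf{u}^k_{(0)}=0$. Consequently $(\rho^{n+1},\mathbf{u}^{n+1})=(\rho^s,\mathbf{u}^s)$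 is again well prepared: $\rho^{n+1}_{(0)}=\rho^n_{(0)}$ is constant and $\nabla\cdot\mathbf{u}^{n+1}_{(0)}=0$. Moreover the leading order velocity satisfies $$\mathbf{u}^{n+1}_{(0)}=\mathbf{u}^n_{(0)}-\Delta t\sum_{k=1}^s\tilde\omega_k\nabla\cdot\big(\mathbf{u}^k_{(0)}\otimes\mathbf{u}^k_{(0)}\big)-\frac{\Delta t}{\rho^n_{(0)}}\sum_{k=1}^s\omega_k\nabla p^k_{(2)},\qquad \nabla\cdot \mathbf{u}^{n+1}_{(0)}=0,$$ where $p^k_{(2)}$ denotes the $\varepsilon^2$-coefficient in the expansion of $p(\rho^k)$, i.e. the limit scheme is a time discretisation of the incompressible Euler system $\partial_t\mathbf{u}+\nabla\cdot(\mathbf{u}\otimes\mathbf{u})+\nabla \pi=0$, $\nabla\cdot\mathbf{u}=0$.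
   Context: Isentropic Euler system (scaled): $\partial_t\rho+\nabla\cdot(\rho\mathbf{u})=0$, $\partial_t(\rho\mathbf{u})+\nabla\cdot(\rho\mathbf{u}\otimes\mathbf{u})+\varepsilon^{-2}\nabla p(\rho)=0$ on the torus $\mathbb{T}^d$ (periodic boundary conditions), with $p(\rho)=\rho^\gamma$, $\gamma>0$, and Mach number parameter $\varepsilon>0$; $\mathbf{q}=\rho\mathbf{u}$. IMEX-RK scheme: real matrices $\tilde A=(\tilde a_{k,j}),A=(a_{k,j})\in\mathbb{R}^{s\times s}$ and weights $\tilde\omega,\omega\in\mathbb{R}^s$, with $\tilde a_{k,j}=0$ for $j\ge k$ and $a_{k,j}=0$ for $j>k$ (diagonally implicit). It is GSA if $\tilde a_{s,j}=\tilde\omega_j$ and $a_{s,j}=\omega_j$ for all $j$. It is of type A if $A$ is invertible (i.e. $a_{k,k}\neq0$ for all $k$), and of type CK if $s\ge2$, the first row of $A$ is zero and the lower right $(s-1)\times(s-1)$ block of $A$ is invertible. Time semi-discrete scheme: for $k=1,\dots,s$, $\rho^k=\rho^n-\Delta t\sum_{l=1}^{k}a_{k,l}\nabla\cdot\mathbf{q}^l$, $\mathbf{q}^k=\mathbf{q}^n-\Delta t\sum_{\ell=1}^{k-1}\tilde a_{k,\ell}\nabla\cdot\big(\mathbf{q}^\ell\otimes\mathbf{q}^\ell/\rho^\ell\big)-\frac{\Delta t}{\varepsilon^2}\sum_{l=1}^k a_{k,l}\nabla p(\rho^l)$, and $\rho^{n+1}=\rho^n-\Delta t\sum_k\omega_k\nabla\cdot\mathbf{q}^k$,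 $\mathbf{q}^{n+1}=\mathbf{q}^n-\Delta t\sum_k\tilde\omega_k\nabla\cdot(\mathbf{q}^k\otimes\mathbf{q}^k/\rho^k)-\frac{\Delta t}{\varepsilon^2}\sum_k\omega_k\nabla p(\rho^k)$; for a GSA scheme $(\rho^{n+1},\mathbf{q}^{n+1})=(\rho^s,\mathbf{q}^s)$. *)

theory Defs
  imports "HOL-Analysis.Analysis"
begin

text \<open>Functions on the torus T^d = R^d / Z^d are modelled as functions on real^'d
  that are 1-periodic in every coordinate direction.\<close>

definition periodic_torus :: "(real^'d \<Rightarrow> 'b) \<Rightarrow> bool" where
  "periodic_torus f \<longleftrightarrow> (\<forall>x i. f (x + axis i 1) = f x)"

definition pd :: "'d::finite \<Rightarrow> (real^'d \<Rightarrow> 'b::real_normed_vector) \<Rightarrow> real^'d \<Rightarrow> 'b" where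
  "pd i f x = frechet_derivative f (at x) (axis i 1)"

fun pdl :: "'d::finite list \<Rightarrow> (real^'d \<Rightarrow> 'b::real_normed_vector) \<Rightarrow> real^'d \<Rightarrow> 'b" where
  "pdl [] f = f"
| "pdl (i # is) f = pd i (pdl is f)"

definition smooth_fun :: "(real^'d::finite \<Rightarrow> 'b::real_normed_vector) \<Rightarrow> bool" where
  "smooth_fun f \<longleftrightarrow> (\<forall>is x. pdl is f differentiable (at x))"

definition C1_fun :: "(real^'d::finite \<Rightarrow> 'b::real_normed_vector) \<Rightarrow> bool" where
  "C1_fun f \<longleftrightarrow> (\<forall>x. f differentiable (at x)) \<and> (\<forall>i. continuous_on UNIV (pd i f))"

definition grad :: "(real^'d::finite \<Rightarrow> real) \<Rightarrow> real^'d \<Rightarrow> real^'d" where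
  "grad f x = (\<chi> i. pd i f x)"

definition dive :: "(real^'d::finite \<Rightarrow> real^'d) \<Rightarrow> real^'d \<Rightarrow> real" where
  "dive q x = (\<Sum>i\<in>UNIV. pd i (\<lambda>y. q y $ i) x)"

definition divT :: "(real^'d::finite \<Rightarrow> 'd \<Rightarrow> 'd \<Rightarrow> real) \<Rightarrow> real^'d \<Rightarrow> real^'d" where
  "divT T x = (\<chi> j. \<Sum>i\<in>UNIV. pd i (\<lambda>y. T y i j) x)"

definition otimes :: "real^'d \<Rightarrow> real^'d \<Rightarrow> 'd \<Rightarrow> 'd \<Rightarrow> real" where
  "otimes a b i j = a $ i * b $ j"

text \<open>Asymptotic expansion F eps = f0 + eps f1 + eps^2 f2 + r_eps with r_eps = o(eps^2)
  in C^1(T^d) as eps \<rightarrow> 0+ (the C^1 norm being sup |r| + sum_i sup |d_i r|).\<close>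
definition expansion ::
  "(real \<Rightarrow> real^'d::finite \<Rightarrow> 'b::real_normed_vector) \<Rightarrow> (real^'d \<Rightarrow> 'b) \<Rightarrow> (real^'d \<Rightarrow> 'b) \<Rightarrow> (real^'d \<Rightarrow> 'b) \<Rightarrow> bool" where
  "expansion F f0 f1 f2 \<longleftrightarrow>
     (let r = (\<lambda>\<epsilon> x. F \<epsilon> x - (f0 x + \<epsilon> *\<^sub>R f1 x + \<epsilon>\<^sup>2 *\<^sub>R f2 x)) in
       (\<forall>\<^sub>F \<epsilon> in at_right 0. C1_fun (r \<epsilon>)) \<and>
       (\<forall>e>0. \<forall>\<^sub>F \<epsilon> in at_right 0.
           \<forall>x. norm (r \<epsilon> x) \<le> e * \<epsilon>\<^sup>2 \<and> (\<forall>i. norm (pd i (r \<epsilon>) x) \<le> e * \<epsilon>\<^sup>2)))"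

definition invertible_block :: "(nat \<Rightarrow> nat \<Rightarrow> real) \<Rightarrow> nat \<Rightarrow> nat \<Rightarrow> bool" where
  "invertible_block M lo hi \<longleftrightarrow> (\<exists>B. \<forall>i\<in>{lo..hi}. \<forall>j\<in>{lo..hi}.
      (\<Sum>l\<in>{lo..hi}. B i l * M l j) = (if i = j then 1 else 0) \<and>
      (\<Sum>l\<in>{lo..hi}. M i l * B l j) = (if i = j then 1 else 0))"

text \<open>IMEX-RK scheme with s stages, matrices At (explicit, tilde A) and A (implicit),
  weights wt (tilde omega) and w (omega), all indexed from 1.\<close>
definition DIRK_IMEX :: "nat \<Rightarrow> (nat \<Rightarrow> nat \<Rightarrow> real) \<Rightarrow> (nat \<Rightarrow> nat \<Rightarrow> real) \<Rightarrow> bool" where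
  "DIRK_IMEX s At A \<longleftrightarrow> s \<ge> 1 \<and>
     (\<forall>k\<in>{1..s}. \<forall>j\<in>{1..s}. j \<ge> k \<longrightarrow> At k j = 0) \<and>
     (\<forall>k\<in>{1..s}. \<forall>j\<in>{1..s}. j > k \<longrightarrow> A k j = 0)"

definition GSA :: "nat \<Rightarrow> (nat \<Rightarrow> nat \<Rightarrow> real) \<Rightarrow> (nat \<Rightarrow> nat \<Rightarrow> real) \<Rightarrow> (nat \<Rightarrow> real) \<Rightarrow> (nat \<Rightarrow> real) \<Rightarrow> bool" where
  "GSA s At A wt w \<longleftrightarrow> (\<forall>j\<in>{1..s}. At s j = wt j \<and> A s j = w j)"

definition type_A :: "nat \<Rightarrow> (nat \<Rightarrow> nat \<Rightarrow> real) \<Rightarrow> bool" where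
  "type_A s A \<longleftrightarrow> invertible_block A 1 s"

definition type_CK :: "nat \<Rightarrow> (nat \<Rightarrow> nat \<Rightarrow> real) \<Rightarrow> bool" where
  "type_CK s A \<longleftrightarrow> s \<ge> 2 \<and> (\<forall>j\<in>{1..s}. A 1 j = 0) \<and> invertible_block A 2 s"

text \<open>Pressure p(rho) = rho^gamma, and the eps^2-coefficient of p(rho) for
  rho = r0 + eps r1 + eps^2 r2 + o(eps^2), r0 > 0:
  p'(r0) r2 + p''(r0)/2 r1^2.\<close>
definition pres :: "real \<Rightarrow> real \<Rightarrow> real" where
  "pres \<gamma> r = r powr \<gamma>"

definition pres2 :: "real \<Rightarrow> real \<Rightarrow> real \<Rightarrow> real \<Rightarrow> real" where
  "pres2 \<gamma> r0 r1 r2 = \<gamma> * r0 powr (\<gamma> - 1) * r2 + \<gamma> * (\<gamma> - 1) / 2 * r0 powr (\<gamma> - 2) * r1\<^sup>2"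

end

theory Submission
  imports Defs
begin

(* In the momentum equation of every stage the pressure term carries the factor
   eps^-2, so the combinations sum_l a_kl grad p(rho^l) are O(eps^2). Inverting the implicit
   matrix (type A), or its lower block after the explicit first stage (type CK), shows that each
   grad p(rho^l) = gamma (rho^l)^(gamma-1) grad rho^l is O(eps^2); hence grad rho^l_(0) and
   grad rho^l_(1) vanish. At leading order the mass equations then say that the constants
   rho_bar - rho^k_(0) are an invertible combination of the divergences rho^l_(0) div u^l_(0),
   so these divergences are spatially constant; but a constant divergence of a periodic field is
   zero. This gives rho^k_(0) = rho_bar and div u^k_(0) = 0, and the eps^2 coefficient of the
   last momentum stage, which by global stiff accuracy is the update, is the incompressible
   Euler step. *)

section \<open>Partial derivatives\<close>

lemma pd_has_derivative: "(f has_derivative D) (at x) \<Longrightarrow> pd i f x = D (axis i 1)"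
  unfolding pd_def by (metis frechet_derivative_at)

lemma has_frechet_derivative_at:
  "f differentiable at x \<Longrightarrow> (f has_derivative frechet_derivative f (at x)) (at x)"
  by (simp add: frechet_derivative_works)

lemma pd_add:
  assumes "f differentiable at x" "g differentiable at x"
  shows "pd i (\<lambda>y. f y + g y) x = pd i f x + pd i g x"
  using pd_has_derivative[OF has_derivative_add[OF assms[THEN has_frechet_derivative_at]]]
  by (simp add: pd_def)

lemma pd_mult:
  fixes f g :: "real^'d::finite \<Rightarrow> real"
  assumes "f differentiable at x" "g differentiable at x"
  shows "pd i (\<lambda>y. f y * g y) x = f x * pd i g x + pd i f x * g x"
  using pd_has_derivative[OF has_derivative_mult[OF assms[THEN has_frechet_derivative_at]]]
  by (simp add: pd_def)

lemma pd_cmult: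
  fixes f :: "real^'d::finite \<Rightarrow> real"
  assumes "f differentiable at x"
  shows "pd i (\<lambda>y. c * f y) x = c * pd i f x"
  using pd_has_derivative[OF has_derivative_mult_right[OF has_frechet_derivative_at[OF assms]]]
  by (simp add: pd_def)

lemma pd_scaleR_const:
  assumes "f differentiable at x"
  shows "pd i (\<lambda>y. c *\<^sub>R f y) x = c *\<^sub>R pd i f x"
  using pd_has_derivative[OF has_derivative_scaleR_right[OF has_frechet_derivative_at[OF assms]]]
  by (simp add: pd_def)

lemma pd_const: "pd i (\<lambda>y. c) x = 0"
  unfolding pd_def by (metis frechet_derivative_at has_derivative_const)

lemma differentiable_component:
  fixes f :: "real^'d::finite \<Rightarrow> real^'e::finite"
  assumes "f differentiable at x"
  shows "(\<lambda>y. f y $ j) differentiable at x"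
  using bounded_linear.has_derivative[OF bounded_linear_vec_nth has_frechet_derivative_at[OF assms]]
  by (auto simp: differentiable_def)

lemma pd_component:
  fixes f :: "real^'d::finite \<Rightarrow> real^'e::finite"
  assumes "f differentiable at x"
  shows "pd i (\<lambda>y. f y $ j) x = pd i f x $ j"
  using pd_has_derivative[OF bounded_linear.has_derivative[OF bounded_linear_vec_nth
        has_frechet_derivative_at[OF assms]]]
  by (simp add: pd_def)

lemma pd_powr:
  fixes f :: "real^'d::finite \<Rightarrow> real"
  assumes "f differentiable at x" "f x > 0"
  shows "pd i (\<lambda>y. f y powr a) x = a * f x powr (a - 1) * pd i f x"
proof -
  have "((\<lambda>z. z powr a) has_derivative (\<lambda>h. (a * f x powr (a - 1)) * h)) (at (f x))"
    using has_real_derivative_powr[OF assms(2)] by (simp add: has_field_derivative_def)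
  from pd_has_derivative[OF has_derivative_compose[OF has_frechet_derivative_at[OF assms(1)] this]]
  show ?thesis by (simp add: pd_def)
qed

lemma smooth_fun_differentiable: "smooth_fun f \<Longrightarrow> f differentiable at x"
  unfolding smooth_fun_def by (metis pdl.simps(1))

lemma smooth_fun_pd_differentiable: "smooth_fun f \<Longrightarrow> pd i f differentiable at x"
  unfolding smooth_fun_def by (metis pdl.simps(1,2))

lemma dive_scaleR:
  fixes f :: "real^'d::finite \<Rightarrow> real" and v :: "real^'d \<Rightarrow> real^'d"
  assumes "f differentiable at x" "v differentiable at x"
  shows "dive (\<lambda>y. f y *\<^sub>R v y) x = (\<Sum>i\<in>UNIV. f x * pd i v x $ i + pd i f x * v x $ i)"
  unfolding dive_def
  using assms by (simp add: pd_mult differentiable_component pd_component)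

lemma divT_scaled_otimes:
  fixes f :: "real^'d::finite \<Rightarrow> real" and v :: "real^'d \<Rightarrow> real^'d"
  assumes "f differentiable at x" "v differentiable at x"
  shows "divT (\<lambda>y i j. f y * otimes (v y) (v y) i j) x $ j =
    (\<Sum>i\<in>UNIV. f x * (v x $ i * pd i v x $ j + pd i v x $ i * v x $ j) + pd i f x * (v x $ i * v x $ j))"
  unfolding divT_def otimes_def
  using assms by (simp add: pd_mult differentiable_component differentiable_mult pd_component)

lemma divT_cmult:
  assumes "\<And>i j. (\<lambda>y. T y i j) differentiable at x"
  shows "divT (\<lambda>y i j. c * T y i j) x = c *\<^sub>R divT T x"
  using assms by (simp add: divT_def vec_eq_iff pd_cmult sum_distrib_left)

lemma has_derivative_along_axis:
  fixes f :: "real^'d::finite \<Rightarrow> real"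
  assumes "f differentiable at (p + t *\<^sub>R axis i 1)"
  shows "((\<lambda>t. f (p + t *\<^sub>R axis i 1)) has_derivative (\<lambda>h. h * pd i f (p + t *\<^sub>R axis i 1)))
           (at t within S)"
proof -
  let ?D = "frechet_derivative f (at (p + t *\<^sub>R axis i 1))"
  have "((\<lambda>t. p + t *\<^sub>R axis i 1) has_derivative (\<lambda>h. h *\<^sub>R axis i 1)) (at t within S)"
    by (auto intro!: derivative_eq_intros)
  from has_derivative_compose[OF this has_derivative_at_withinI[OF has_frechet_derivative_at[OF assms]]]
  have "((\<lambda>t. f (p + t *\<^sub>R axis i 1)) has_derivative (\<lambda>h. ?D (h *\<^sub>R axis i 1))) (at t within S)"
    by (simp add: o_def)
  moreover have "linear ?D"
    using has_derivative_linear[OF has_frechet_derivative_at[OF assms]] .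
  ultimately show ?thesis by (simp add: pd_def linear_scale)
qed

lemma difference_quotient_uniformly_close:
  fixes f :: "real^'d::finite \<Rightarrow> real"
  assumes diff: "\<And>x. f differentiable at x" and cont: "continuous_on UNIV (pd i f)" and "e > 0"
  obtains \<delta> where "\<delta> > 0"
    "\<And>x h. x \<in> cbox (0::real^'d) 1 \<Longrightarrow> 0 < h \<Longrightarrow> h < \<delta> \<Longrightarrow>
       \<bar>(f (x + h *\<^sub>R axis i 1) - f x) / h - pd i f x\<bar> < e"
proof -
  have "uniformly_continuous_on (cbox 0 2) (pd i f)"
    using cont by (intro compact_uniformly_continuous) (auto intro: continuous_on_subset)
  then obtain \<delta> where "\<delta> > 0" and \<delta>:
    "\<And>y z. y \<in> cbox 0 2 \<Longrightarrow> z \<in> cbox 0 2 \<Longrightarrow> dist z y < \<delta> \<Longrightarrow> dist (pd i f z) (pd i f y) < e"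
    unfolding uniformly_continuous_on_def using \<open>e > 0\<close> by metis
  show ?thesis
  proof (rule that[of "min \<delta> 1"])
    show "min \<delta> 1 > 0" using \<open>\<delta> > 0\<close> by simp
    fix x :: "real^'d" and h :: real
    assume x: "x \<in> cbox 0 1" and h: "0 < h" "h < min \<delta> 1"
    obtain \<xi> where \<xi>: "0 < \<xi>" "\<xi> < h"
      and mvt: "f (x + h *\<^sub>R axis i 1) - f (x + 0 *\<^sub>R axis i 1) = (h - 0) * pd i f (x + \<xi> *\<^sub>R axis i 1)"
      using mvt_simple[OF h(1) has_derivative_along_axis[OF diff, where p = x and i = i]] by auto
    have x01: "0 \<le> x $ j" "x $ j \<le> 1" for j
      using x by (auto simp: mem_box_cart)
    have "x + \<xi> *\<^sub>R axis i 1 \<in> cbox 0 2" "x \<in> cbox 0 2"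
      using x01 \<xi> h order_trans[OF x01(2)] add_mono[OF x01(2), of \<xi> 1]
      by (auto simp: mem_box_cart axis_def)
    moreover have "dist (x + \<xi> *\<^sub>R axis i 1) x < \<delta>"
      using \<xi> h by (simp add: dist_norm)
    ultimately have "\<bar>pd i f (x + \<xi> *\<^sub>R axis i 1) - pd i f x\<bar> < e"
      using \<delta> by (simp add: dist_real_def)
    then show "\<bar>(f (x + h *\<^sub>R axis i 1) - f x) / h - pd i f x\<bar> < e"
      using mvt h by simp
  qed
qed

section \<open>Constant divergence of a periodic field\<close>

definition grid :: "nat \<Rightarrow> ('d \<Rightarrow> nat) set" where
  "grid N = {m. \<forall>j. m j < N}"

definition grid_point :: "nat \<Rightarrow> ('d::finite \<Rightarrow> nat) \<Rightarrow> real^'d" where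
  "grid_point N m = (\<chi> j. real (m j) / real N)"

lemma finite_grid: "finite (grid N :: ('d::finite \<Rightarrow> nat) set)"
proof -
  have "grid N = PiE (UNIV :: 'd set) (\<lambda>_. {..<N})"
    by (auto simp: grid_def PiE_def extensional_def)
  then show ?thesis by (simp add: finite_PiE)
qed

lemma grid_point_in_unit_box: "m \<in> grid N \<Longrightarrow> grid_point N m \<in> cbox 0 1"
  by (auto simp: grid_def grid_point_def mem_box_cart divide_le_eq_1 less_imp_le)

lemma grid_point_shift:
  assumes "m \<in> grid N"
  shows "grid_point N m + (1 / real N) *\<^sub>R axis i 1 =
    grid_point N (m(i := Suc (m i) mod N)) + (if Suc (m i) = N then axis i 1 else 0)"
proof -
  have "m i < N" using assms by (simp add: grid_def)
  then have "Suc (m i) mod N = (if Suc (m i) = N then 0 else Suc (m i))"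
    by simp
  then show ?thesis
    by (auto simp: vec_eq_iff grid_point_def axis_def add_divide_distrib[symmetric])
qed

lemma periodic_grid_sum_shift:
  fixes f :: "real^'d::finite \<Rightarrow> 'b::comm_monoid_add"
  assumes per: "periodic_torus f" and N: "N > 0"
  shows "(\<Sum>m\<in>grid N. f (grid_point N m + (1 / real N) *\<^sub>R axis i 1)) = (\<Sum>m\<in>grid N. f (grid_point N m))"
proof -
  define \<sigma> where "\<sigma> m = m(i := Suc (m i) mod N)" for m :: "'d \<Rightarrow> nat"
  have "inj_on \<sigma> (grid N)"
  proof (rule inj_onI)
    fix a b assume "a \<in> grid N" "b \<in> grid N" "\<sigma> a = \<sigma> b"
    then have "Suc (a i) mod N = Suc (b i) mod N" "a i < N" "b i < N"
      "\<And>j. j \<noteq> i \<Longrightarrow> a j = b j"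
      unfolding \<sigma>_def grid_def by (metis fun_upd_same, simp, simp, metis fun_upd_other)
    then have "a i = b i" by (auto simp: mod_Suc split: if_splits)
    with \<open>\<And>j. j \<noteq> i \<Longrightarrow> a j = b j\<close> show "a = b" by (metis ext)
  qed
  moreover have "\<sigma> ` grid N \<subseteq> grid N" using N by (auto simp: \<sigma>_def grid_def)
  ultimately have bij: "bij_betw \<sigma> (grid N) (grid N)"
    using endo_inj_surj[OF finite_grid] by (simp add: bij_betw_def)
  have "f (grid_point N m + (1 / real N) *\<^sub>R axis i 1) = f (grid_point N (\<sigma> m))" if "m \<in> grid N" for m
    using per grid_point_shift[OF that] by (simp add: \<sigma>_def periodic_torus_def)
  then show ?thesis
    using sum.reindex_bij_betw[OF bij, of "\<lambda>m. f (grid_point N m)"] by simp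
qed

lemma periodic_grid_sum_pd_small:
  fixes g :: "real^'d::finite \<Rightarrow> real"
  assumes diff: "\<And>x. g differentiable at x" and cont: "continuous_on UNIV (pd i g)"
    and per: "periodic_torus g" and "e > 0"
  shows "\<forall>\<^sub>F N in sequentially.
    \<bar>\<Sum>m\<in>grid N. pd i g (grid_point N m)\<bar> \<le> real (card (grid N :: ('d \<Rightarrow> nat) set)) * e"
proof -
  obtain \<delta> where "\<delta> > 0" and close: "\<And>x h. x \<in> cbox 0 1 \<Longrightarrow> 0 < h \<Longrightarrow> h < \<delta> \<Longrightarrow>
      \<bar>(g (x + h *\<^sub>R axis i 1) - g x) / h - pd i g x\<bar> < e"
    using difference_quotient_uniformly_close[OF diff cont \<open>e > 0\<close>] by blast
  obtain n :: nat where n: "inverse (real (Suc n)) < \<delta>"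
    using reals_Archimedean[OF \<open>\<delta> > 0\<close>] by blast
  show ?thesis
    unfolding eventually_sequentially
  proof (intro exI allI impI)
    fix N :: nat assume "Suc n \<le> N"
    define h where "h = 1 / real N"
    define G :: "('d \<Rightarrow> nat) set" where "G = grid N"
    have "0 < h" using \<open>Suc n \<le> N\<close> by (simp add: h_def)
    have "h \<le> 1 / real (Suc n)"
      unfolding h_def by (rule divide_left_mono) (use \<open>Suc n \<le> N\<close> in auto)
    then have "h < \<delta>" using n by (simp add: inverse_eq_divide)
    define q where "q m = (g (grid_point N m + h *\<^sub>R axis i 1) - g (grid_point N m)) / h" for m
    have "(\<Sum>m\<in>G. q m) = ((\<Sum>m\<in>G. g (grid_point N m + h *\<^sub>R axis i 1)) - (\<Sum>m\<in>G. g (grid_point N m))) / h"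
      by (simp add: q_def sum_subtractf flip: sum_divide_distrib)
    also have "\<dots> = 0"
      using periodic_grid_sum_shift[OF per] \<open>Suc n \<le> N\<close> by (simp add: G_def h_def)
    finally have "\<bar>\<Sum>m\<in>G. pd i g (grid_point N m)\<bar> = \<bar>\<Sum>m\<in>G. q m - pd i g (grid_point N m)\<bar>"
      by (simp add: sum_subtractf)
    also have "\<dots> \<le> (\<Sum>m\<in>G. \<bar>q m - pd i g (grid_point N m)\<bar>)"
      by (rule sum_abs)
    also have "\<dots> \<le> (\<Sum>m\<in>G. e)"
      using close[OF grid_point_in_unit_box \<open>0 < h\<close> \<open>h < \<delta>\<close>]
      by (intro sum_mono less_imp_le) (simp add: G_def q_def)
    finally show "\<bar>\<Sum>m\<in>grid N. pd i g (grid_point N m)\<bar> \<le> real (card (grid N :: ('d \<Rightarrow> nat) set)) * e"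
      by (simp add: G_def)
  qed
qed

text \<open>Riemann sums of the divergence over a fine grid are small, because the difference quotients
  they approximate telescope by periodicity; so a constant divergence must be zero.\<close>

lemma periodic_divergence_const_eq_zero:
  fixes v :: "real^'d::finite \<Rightarrow> real^'d"
  assumes smooth: "smooth_fun v" and per: "periodic_torus v" and div: "\<And>x. dive v x = K"
  shows "K = 0"
proof (rule ccontr)
  assume "K \<noteq> 0"
  define e where "e = \<bar>K\<bar> / (2 * real CARD('d))"
  have "e > 0" using \<open>K \<noteq> 0\<close> by (simp add: e_def)
  define vc where "vc i y = v y $ i" for i y
  have pd_vc: "pd i (vc i) = (\<lambda>y. pd i v y $ i)" for i
    using smooth by (simp add: fun_eq_iff vc_def[abs_def] pd_component smooth_fun_differentiable)
  have "continuous_on UNIV (pd i v)" for i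
    using smooth_fun_pd_differentiable[OF smooth]
    by (intro differentiable_imp_continuous_on) (auto simp: differentiable_on_def)
  then have "continuous_on UNIV (pd i (vc i))" for i
    unfolding pd_vc by (rule continuous_on_component)
  moreover have "vc i differentiable at x" for i x
    unfolding vc_def by (rule differentiable_component[OF smooth_fun_differentiable[OF smooth]])
  moreover have "periodic_torus (vc i)" for i
    using per by (simp add: periodic_torus_def vc_def)
  ultimately have "\<forall>\<^sub>F N in sequentially. \<forall>i.
      \<bar>\<Sum>m\<in>grid N. pd i (vc i) (grid_point N m)\<bar> \<le> real (card (grid N :: ('d \<Rightarrow> nat) set)) * e"
    using \<open>e > 0\<close> by (intro eventually_all_finite periodic_grid_sum_pd_small)
  then obtain N0 where N0: "\<And>N. N \<ge> N0 \<Longrightarrow> \<forall>i. \<bar>\<Sum>m\<in>grid N. pd i (vc i) (grid_point N m)\<bar>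
      \<le> real (card (grid N :: ('d \<Rightarrow> nat) set)) * e"
    unfolding eventually_sequentially by blast
  define N where "N = Suc N0"
  define G :: "('d \<Rightarrow> nat) set" where "G = grid N"
  have N: "\<bar>\<Sum>m\<in>G. pd i (vc i) (grid_point N m)\<bar> \<le> real (card G) * e" for i
    using N0[of N] by (simp add: N_def G_def)
  have "(\<lambda>_. 0) \<in> G" by (simp add: G_def grid_def N_def)
  then have "card G > 0" using finite_grid[of N] card_gt_0_iff unfolding G_def by blast
  have "real (card G) * \<bar>K\<bar> = \<bar>\<Sum>i\<in>UNIV. \<Sum>m\<in>G. pd i (vc i) (grid_point N m)\<bar>"
    using div by (subst sum.swap) (simp add: dive_def vc_def[abs_def] abs_mult)
  also have "\<dots> \<le> (\<Sum>i\<in>UNIV. \<bar>\<Sum>m\<in>G. pd i (vc i) (grid_point N m)\<bar>)"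
    by (rule sum_abs)
  also have "\<dots> \<le> (\<Sum>i\<in>(UNIV::'d set). real (card G) * e)"
    using N by (rule sum_mono)
  also have "\<dots> = real (card G) * (\<bar>K\<bar> / 2)" by (simp add: e_def)
  finally have "\<bar>K\<bar> \<le> \<bar>K\<bar> / 2"
    using \<open>card G > 0\<close> by simp
  then show False using \<open>K \<noteq> 0\<close> by simp
qed

lemma constant_if_pd_zero:
  fixes f :: "real^'d::finite \<Rightarrow> real"
  assumes diff: "\<And>y. f differentiable at y" and pd0: "\<And>y i. pd i f y = 0"
  shows "f x = f 0"
proof -
  have "frechet_derivative f (at y) h = 0" for y h
  proof -
    have lin: "linear (frechet_derivative f (at y))"
      using has_derivative_linear[OF has_frechet_derivative_at[OF diff]] .
    have "frechet_derivative f (at y) h = frechet_derivative f (at y) (\<Sum>i\<in>UNIV. h $ i *\<^sub>R axis i 1)"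
      using basis_expansion[of h] by (simp add: scalar_mult_eq_scaleR)
    also have "\<dots> = 0"
      using pd0 by (simp add: linear_sum[OF lin] linear_scale[OF lin] pd_def)
    finally show ?thesis .
  qed
  then have "frechet_derivative f (at y) = (\<lambda>h. 0)" for y by auto
  then have "(f has_derivative (\<lambda>h. 0)) (at y within UNIV)" for y
    by (metis has_frechet_derivative_at[OF diff])
  then show ?thesis using has_derivative_zero_constant[of UNIV f] by (metis UNIV_I convex_UNIV)
qed

lemma pd_zero_at_min:
  fixes f :: "real^'d::finite \<Rightarrow> real"
  assumes "f differentiable at x" and "\<And>y. f x \<le> f y"
  shows "pd i f x = 0"
proof -
  have "frechet_derivative f (at x) = (\<lambda>h. 0)"
    by (rule has_derivative_local_min[OF has_frechet_derivative_at[OF assms(1)]]) (use assms(2) in auto)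
  then show ?thesis by (simp add: pd_def)
qed

section \<open>Expansions in the Mach number\<close>

lemma tendsto_scaled_remainder_zero:
  fixes r :: "real \<Rightarrow> 'a::real_normed_vector"
  assumes "\<And>e. e > 0 \<Longrightarrow> \<forall>\<^sub>F \<epsilon> in at_right 0. norm (r \<epsilon>) \<le> e * \<epsilon>\<^sup>2"
  shows "((\<lambda>\<epsilon>. (1 / \<epsilon>\<^sup>2) *\<^sub>R r \<epsilon>) \<longlongrightarrow> 0) (at_right 0)"
proof (rule tendstoI)
  fix e :: real assume "e > 0"
  have "e / 2 > 0" using \<open>e > 0\<close> by simp
  from assms[OF this] have "\<forall>\<^sub>F \<epsilon> in at_right 0. norm (r \<epsilon>) \<le> e / 2 * \<epsilon>\<^sup>2" .
  moreover have "\<forall>\<^sub>F \<epsilon> in at_right 0. \<epsilon> > (0::real)" by (simp add: eventually_at_right_less)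
  ultimately show "\<forall>\<^sub>F \<epsilon> in at_right 0. dist ((1 / \<epsilon>\<^sup>2) *\<^sub>R r \<epsilon>) 0 < e"
  proof eventually_elim
    case (elim \<epsilon>)
    have "e / 2 * \<epsilon>\<^sup>2 < e * \<epsilon>\<^sup>2" using \<open>e > 0\<close> elim(2) by simp
    then show ?case using elim by (simp add: field_simps)
  qed
qed

lemma tendsto_of_quadratic_expansion:
  fixes g :: "real \<Rightarrow> 'a::real_normed_vector"
  assumes rem: "((\<lambda>\<epsilon>. (1 / \<epsilon>\<^sup>2) *\<^sub>R (g \<epsilon> - (a + \<epsilon> *\<^sub>R b + \<epsilon>\<^sup>2 *\<^sub>R c))) \<longlongrightarrow> 0) (at_right 0)"
  shows "(g \<longlongrightarrow> a) (at_right 0)"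
    and "a = 0 \<Longrightarrow> ((\<lambda>\<epsilon>. (1 / \<epsilon>) *\<^sub>R g \<epsilon>) \<longlongrightarrow> b) (at_right 0)"
    and "a = 0 \<Longrightarrow> b = 0 \<Longrightarrow> ((\<lambda>\<epsilon>. (1 / \<epsilon>\<^sup>2) *\<^sub>R g \<epsilon>) \<longlongrightarrow> c) (at_right 0)"
proof -
  define R where "R \<epsilon> = (1 / \<epsilon>\<^sup>2) *\<^sub>R (g \<epsilon> - (a + \<epsilon> *\<^sub>R b + \<epsilon>\<^sup>2 *\<^sub>R c))" for \<epsilon>
  have R: "(R \<longlongrightarrow> 0) (at_right 0)" using rem by (simp add: R_def[abs_def])
  have \<epsilon>: "((\<lambda>\<epsilon>::real. \<epsilon>) \<longlongrightarrow> 0) (at_right 0)" by (rule tendsto_ident_at)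
  have g_eq: "\<forall>\<^sub>F \<epsilon> in at_right 0. g \<epsilon> = a + \<epsilon> *\<^sub>R b + \<epsilon>\<^sup>2 *\<^sub>R c + \<epsilon>\<^sup>2 *\<^sub>R R \<epsilon>"
    by (simp add: eventually_at_right_less R_def eventually_mono[of "\<lambda>\<epsilon>. \<epsilon> > 0"])
  have "((\<lambda>\<epsilon>. a + \<epsilon> *\<^sub>R b + \<epsilon>\<^sup>2 *\<^sub>R c + \<epsilon>\<^sup>2 *\<^sub>R R \<epsilon>) \<longlongrightarrow> a + 0 *\<^sub>R b + 0\<^sup>2 *\<^sub>R c + 0\<^sup>2 *\<^sub>R 0) (at_right 0)"
    by (intro tendsto_intros \<epsilon> R)
  then show "(g \<longlongrightarrow> a) (at_right 0)"
    using g_eq by (simp add: tendsto_cong)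
  assume "a = 0"
  have "\<forall>\<^sub>F \<epsilon> in at_right 0. (1 / \<epsilon>) *\<^sub>R g \<epsilon> = b + \<epsilon> *\<^sub>R c + \<epsilon> *\<^sub>R R \<epsilon>"
    using g_eq eventually_at_right_less[of 0]
    by eventually_elim (simp add: \<open>a = 0\<close> scaleR_add_right power2_eq_square)
  moreover have "((\<lambda>\<epsilon>. b + \<epsilon> *\<^sub>R c + \<epsilon> *\<^sub>R R \<epsilon>) \<longlongrightarrow> b + 0 *\<^sub>R c + 0 *\<^sub>R 0) (at_right 0)"
    by (intro tendsto_intros \<epsilon> R)
  ultimately show "((\<lambda>\<epsilon>. (1 / \<epsilon>) *\<^sub>R g \<epsilon>) \<longlongrightarrow> b) (at_right 0)"
    by (simp add: tendsto_cong)
  assume "b = 0"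
  have "\<forall>\<^sub>F \<epsilon> in at_right 0. (1 / \<epsilon>\<^sup>2) *\<^sub>R g \<epsilon> = c + R \<epsilon>"
    using g_eq eventually_at_right_less[of 0]
    by eventually_elim (simp add: \<open>a = 0\<close> \<open>b = 0\<close> scaleR_add_right)
  moreover have "((\<lambda>\<epsilon>. c + R \<epsilon>) \<longlongrightarrow> c + 0) (at_right 0)"
    by (intro tendsto_intros R)
  ultimately show "((\<lambda>\<epsilon>. (1 / \<epsilon>\<^sup>2) *\<^sub>R g \<epsilon>) \<longlongrightarrow> c) (at_right 0)"
    by (simp add: tendsto_cong)
qed

lemma expansion_differentiable:
  assumes "expansion F f0 f1 f2" and "\<And>y. f0 differentiable at y" "\<And>y. f1 differentiable at y"
    "\<And>y. f2 differentiable at y"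
  shows "\<forall>\<^sub>F \<epsilon> in at_right 0. \<forall>y. F \<epsilon> differentiable at y"
proof -
  have "\<forall>\<^sub>F \<epsilon> in at_right 0. C1_fun (\<lambda>x. F \<epsilon> x - (f0 x + \<epsilon> *\<^sub>R f1 x + \<epsilon>\<^sup>2 *\<^sub>R f2 x))"
    using assms(1) by (simp add: expansion_def)
  then show ?thesis
  proof eventually_elim
    case (elim \<epsilon>)
    show ?case
    proof
      fix y
      have "(\<lambda>x. (f0 x + \<epsilon> *\<^sub>R f1 x + \<epsilon>\<^sup>2 *\<^sub>R f2 x) + (F \<epsilon> x - (f0 x + \<epsilon> *\<^sub>R f1 x + \<epsilon>\<^sup>2 *\<^sub>R f2 x)))
          differentiable at y"
        using elim assms(2-4) unfolding C1_fun_def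
        by (intro differentiable_add differentiable_scaleR differentiable_const) auto
      then show "F \<epsilon> differentiable at y" by simp
    qed
  qed
qed

lemma expansion_remainder:
  assumes "expansion F f0 f1 f2"
  shows "((\<lambda>\<epsilon>. (1 / \<epsilon>\<^sup>2) *\<^sub>R (F \<epsilon> x - (f0 x + \<epsilon> *\<^sub>R f1 x + \<epsilon>\<^sup>2 *\<^sub>R f2 x))) \<longlongrightarrow> 0) (at_right 0)"
proof (rule tendsto_scaled_remainder_zero)
  fix e :: real assume "e > 0"
  from assms have "\<forall>e>0. \<forall>\<^sub>F \<epsilon> in at_right 0. \<forall>x. norm (F \<epsilon> x - (f0 x + \<epsilon> *\<^sub>R f1 x + \<epsilon>\<^sup>2 *\<^sub>R f2 x)) \<le> e * \<epsilon>\<^sup>2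
      \<and> (\<forall>i. norm (pd i (\<lambda>x. F \<epsilon> x - (f0 x + \<epsilon> *\<^sub>R f1 x + \<epsilon>\<^sup>2 *\<^sub>R f2 x)) x) \<le> e * \<epsilon>\<^sup>2)"
    unfolding expansion_def Let_def by (rule conjunct2)
  then have "\<forall>\<^sub>F \<epsilon> in at_right 0. \<forall>x. norm (F \<epsilon> x - (f0 x + \<epsilon> *\<^sub>R f1 x + \<epsilon>\<^sup>2 *\<^sub>R f2 x)) \<le> e * \<epsilon>\<^sup>2
      \<and> (\<forall>i. norm (pd i (\<lambda>x. F \<epsilon> x - (f0 x + \<epsilon> *\<^sub>R f1 x + \<epsilon>\<^sup>2 *\<^sub>R f2 x)) x) \<le> e * \<epsilon>\<^sup>2)"
    using \<open>e > 0\<close> by blast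
  then show "\<forall>\<^sub>F \<epsilon> in at_right 0. norm (F \<epsilon> x - (f0 x + \<epsilon> *\<^sub>R f1 x + \<epsilon>\<^sup>2 *\<^sub>R f2 x)) \<le> e * \<epsilon>\<^sup>2"
    by (rule eventually_mono) blast
qed

lemma expansion_pd_remainder:
  assumes exp: "expansion F f0 f1 f2" and "\<And>y. f0 differentiable at y" "\<And>y. f1 differentiable at y"
    "\<And>y. f2 differentiable at y"
  shows "((\<lambda>\<epsilon>. (1 / \<epsilon>\<^sup>2) *\<^sub>R (pd i (F \<epsilon>) x - (pd i f0 x + \<epsilon> *\<^sub>R pd i f1 x + \<epsilon>\<^sup>2 *\<^sub>R pd i f2 x)))
           \<longlongrightarrow> 0) (at_right 0)"
proof (rule tendsto_scaled_remainder_zero)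
  define r where "r \<epsilon> x = F \<epsilon> x - (f0 x + \<epsilon> *\<^sub>R f1 x + \<epsilon>\<^sup>2 *\<^sub>R f2 x)" for \<epsilon> x
  have poly: "(\<lambda>x. f0 x + \<epsilon> *\<^sub>R f1 x + \<epsilon>\<^sup>2 *\<^sub>R f2 x) differentiable at y" for \<epsilon> y
    using assms(2-4) by (intro differentiable_add differentiable_scaleR differentiable_const)
  fix e :: real assume "e > 0"
  have "\<forall>\<^sub>F \<epsilon> in at_right 0. C1_fun (r \<epsilon>)"
    and "\<forall>\<^sub>F \<epsilon> in at_right 0. \<forall>x. norm (r \<epsilon> x) \<le> e * \<epsilon>\<^sup>2 \<and> (\<forall>i. norm (pd i (r \<epsilon>) x) \<le> e * \<epsilon>\<^sup>2)"
    using exp \<open>e > 0\<close> unfolding expansion_def Let_def r_def[abs_def] by auto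
  then show "\<forall>\<^sub>F \<epsilon> in at_right 0.
      norm (pd i (F \<epsilon>) x - (pd i f0 x + \<epsilon> *\<^sub>R pd i f1 x + \<epsilon>\<^sup>2 *\<^sub>R pd i f2 x)) \<le> e * \<epsilon>\<^sup>2"
  proof eventually_elim
    case (elim \<epsilon>)
    have "F \<epsilon> = (\<lambda>x. (f0 x + \<epsilon> *\<^sub>R f1 x + \<epsilon>\<^sup>2 *\<^sub>R f2 x) + r \<epsilon> x)" by (simp add: r_def)
    then have "pd i (F \<epsilon>) x = pd i f0 x + \<epsilon> *\<^sub>R pd i f1 x + \<epsilon>\<^sup>2 *\<^sub>R pd i f2 x + pd i (r \<epsilon>) x"
      using elim assms(2-4) poly
      by (simp add: C1_fun_def pd_add pd_scaleR_const differentiable_add differentiable_scaleR)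
    then show ?case using elim by (simp add: r_def[abs_def])
  qed
qed

section \<open>IMEX stage systems\<close>

lemma left_inverse_solves:
  fixes z h :: "nat \<Rightarrow> 'a::real_vector"
  assumes "finite J"
    and B: "\<forall>i\<in>J. \<forall>j\<in>J. (\<Sum>l\<in>J. B i l * M l j) = (if i = j then 1 else 0)"
    and sys: "\<forall>k\<in>J. (\<Sum>l\<in>J. M k l *\<^sub>R z l) = h k" and "i \<in> J"
  shows "z i = (\<Sum>k\<in>J. B i k *\<^sub>R h k)"
proof -
  have "(\<Sum>k\<in>J. B i k *\<^sub>R h k) = (\<Sum>k\<in>J. \<Sum>l\<in>J. (B i k * M k l) *\<^sub>R z l)"
  proof (intro sum.cong refl)
    fix k assume "k \<in> J"
    then have "h k = (\<Sum>l\<in>J. M k l *\<^sub>R z l)" using sys by simp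
    then show "B i k *\<^sub>R h k = (\<Sum>l\<in>J. (B i k * M k l) *\<^sub>R z l)" by (simp add: scaleR_sum_right)
  qed
  also have "\<dots> = (\<Sum>l\<in>J. (\<Sum>k\<in>J. B i k * M k l) *\<^sub>R z l)"
    by (subst sum.swap) (simp add: scaleR_sum_left)
  also have "\<dots> = (\<Sum>l\<in>J. if i = l then z l else 0)"
    using B \<open>i \<in> J\<close> by (intro sum.cong refl) simp
  also have "\<dots> = z i" using \<open>finite J\<close> \<open>i \<in> J\<close> by simp
  finally show ?thesis by simp
qed

text \<open>In an IMEX stage system the type A / CK assumptions let one solve for every stage value;
  so a property of the right-hand sides that is preserved by linear combinations passes to all
  stage values, provided that in the CK case it holds for the (explicit) first stage.\<close>

lemma imex_stage_values_preserve:
  fixes z h :: "nat \<Rightarrow> 'x \<Rightarrow> 'a::real_vector"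
  assumes type: "type_A s A \<or> type_CK s A"
    and sys: "\<And>k x. k \<in> {1..s} \<Longrightarrow> (\<Sum>l\<in>{1..s}. A k l *\<^sub>R z l x) = h k x"
    and P_zero: "P (\<lambda>x. 0)" and P_add: "\<And>f g. P f \<Longrightarrow> P g \<Longrightarrow> P (\<lambda>x. f x + g x)"
    and P_scale: "\<And>c f. P f \<Longrightarrow> P (\<lambda>x. c *\<^sub>R f x)"
    and h: "\<And>k. k \<in> {1..s} \<Longrightarrow> P (h k)" and z1: "type_CK s A \<Longrightarrow> P (z 1)"
    and l: "l \<in> {1..s}"
  shows "P (z l)"
proof -
  have P_sum: "P (\<lambda>x. \<Sum>j\<in>J. c j *\<^sub>R f j x)"
    if "finite J" "\<And>j. j \<in> J \<Longrightarrow> P (f j)" for J :: "nat set" and c f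
    using that
  proof (induction J rule: finite_induct)
    case (insert j J)
    then show ?case using P_add[OF P_scale[of "f j" "c j"] insert.IH] by simp
  qed (simp add: P_zero)
  show ?thesis
    using type
  proof
    assume "type_A s A"
    then obtain B where
      B: "\<forall>i\<in>{1..s}. \<forall>j\<in>{1..s}. (\<Sum>l\<in>{1..s}. B i l * A l j) = (if i = j then 1 else 0)"
      unfolding type_A_def invertible_block_def by blast
    have "z l x = (\<Sum>k\<in>{1..s}. B l k *\<^sub>R h k x)" for x
      using left_inverse_solves[OF finite_atLeastAtMost B _ l, of "\<lambda>l. z l x"] sys by auto
    then have "z l = (\<lambda>x. \<Sum>k\<in>{1..s}. B l k *\<^sub>R h k x)" by auto
    then show "P (z l)" using P_sum[OF finite_atLeastAtMost h] by simp
  next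
    assume CK: "type_CK s A"
    then have "s \<ge> 2" by (simp add: type_CK_def)
    obtain B where
      B: "\<forall>i\<in>{2..s}. \<forall>j\<in>{2..s}. (\<Sum>l\<in>{2..s}. B i l * A l j) = (if i = j then 1 else 0)"
      using CK unfolding type_CK_def invertible_block_def by blast
    have split: "{1..s} = insert 1 {2..s}" using \<open>s \<ge> 2\<close> by auto
    show "P (z l)"
    proof (cases "l = 1")
      case False
      then have "l \<in> {2..s}" using l by auto
      have "\<forall>k\<in>{2..s}. (\<Sum>l\<in>{2..s}. A k l *\<^sub>R z l x) = h k x + (- A k 1) *\<^sub>R z 1 x" for x
      proof
        fix k assume "k \<in> {2..s}"
        then have "(\<Sum>l\<in>insert 1 {2..s}. A k l *\<^sub>R z l x) = h k x" using sys[of k x] split by auto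
        then show "(\<Sum>l\<in>{2..s}. A k l *\<^sub>R z l x) = h k x + (- A k 1) *\<^sub>R z 1 x"
          by (simp add: algebra_simps)
      qed
      from left_inverse_solves[OF finite_atLeastAtMost B this \<open>l \<in> {2..s}\<close>]
      have "z l = (\<lambda>x. \<Sum>k\<in>{2..s}. B l k *\<^sub>R (h k x + (- A k 1) *\<^sub>R z 1 x))"
        by auto
      moreover have "P (\<lambda>x. \<Sum>k\<in>{2..s}. B l k *\<^sub>R (h k x + (- A k 1) *\<^sub>R z 1 x))"
      proof (rule P_sum[OF finite_atLeastAtMost])
        fix k assume "k \<in> {2..s}"
        then show "P (\<lambda>x. h k x + (- A k 1) *\<^sub>R z 1 x)"
          using P_add[OF h P_scale[OF z1[OF CK]], of k "- A k 1"] \<open>k \<in> {2..s}\<close> by simp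
      qed
      ultimately show ?thesis by simp
    qed (use z1[OF CK] in simp)
  qed
qed

lemma tendsto_zero_of_scaled_convergent:
  fixes g :: "real \<Rightarrow> 'a::real_normed_vector"
  assumes "((\<lambda>\<epsilon>. (1 / \<epsilon>\<^sup>2) *\<^sub>R g \<epsilon>) \<longlongrightarrow> M) (at_right 0)"
  shows "(g \<longlongrightarrow> 0) (at_right 0)" and "((\<lambda>\<epsilon>. (1 / \<epsilon>) *\<^sub>R g \<epsilon>) \<longlongrightarrow> 0) (at_right 0)"
proof -
  have "((\<lambda>\<epsilon>. (1 / \<epsilon>\<^sup>2) *\<^sub>R g \<epsilon> - M) \<longlongrightarrow> M - M) (at_right 0)"
    by (intro tendsto_intros assms)
  moreover have "\<forall>\<^sub>F \<epsilon> in at_right 0. (1 / \<epsilon>\<^sup>2) *\<^sub>R g \<epsilon> - M = (1 / \<epsilon>\<^sup>2) *\<^sub>R (g \<epsilon> - (0 + \<epsilon> *\<^sub>R 0 + \<epsilon>\<^sup>2 *\<^sub>R M))"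
    using eventually_at_right_less[of 0] by eventually_elim (simp add: scaleR_diff_right)
  ultimately have "((\<lambda>\<epsilon>. (1 / \<epsilon>\<^sup>2) *\<^sub>R (g \<epsilon> - (0 + \<epsilon> *\<^sub>R 0 + \<epsilon>\<^sup>2 *\<^sub>R M))) \<longlongrightarrow> 0) (at_right 0)"
    by (simp add: tendsto_cong)
  from tendsto_of_quadratic_expansion(1,2)[OF this]
  show "(g \<longlongrightarrow> 0) (at_right 0)" and "((\<lambda>\<epsilon>. (1 / \<epsilon>) *\<^sub>R g \<epsilon>) \<longlongrightarrow> 0) (at_right 0)" by simp_all
qed

section \<open>Asymptotics of the stage values\<close>

locale isentropic_imex_stages =
  fixes \<gamma> \<Delta>t :: real and s :: nat and At A :: "nat \<Rightarrow> nat \<Rightarrow> real"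
    and \<rho>n0 \<rho>n2 :: "real^'d::finite \<Rightarrow> real" and un0 un1 :: "real^'d \<Rightarrow> real^'d"
    and rho :: "real \<Rightarrow> nat \<Rightarrow> real^'d \<Rightarrow> real" and q :: "real \<Rightarrow> nat \<Rightarrow> real^'d \<Rightarrow> real^'d"
    and rho0 rho1 rho2 :: "nat \<Rightarrow> real^'d \<Rightarrow> real" and u0 u1 u2 :: "nat \<Rightarrow> real^'d \<Rightarrow> real^'d"
  assumes gamma_pos: "\<gamma> > 0" and dt_pos: "\<Delta>t > 0"
    and scheme: "DIRK_IMEX s At A" and scheme_type: "type_A s A \<or> type_CK s A"
    and smooth_rho_n0: "smooth_fun \<rho>n0" and smooth_rho_n2: "smooth_fun \<rho>n2"
    and rho_n0_pos: "\<And>x. \<rho>n0 x > 0" and grad_rho_n0: "\<And>x. grad \<rho>n0 x = 0"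
    and div_u_n0: "\<And>x. dive un0 x = 0"
    and stage_pos: "\<forall>\<^sub>F \<epsilon> in at_right 0. \<forall>k\<in>{1..s}. \<forall>x. rho \<epsilon> k x > 0"
    and stage_rho: "\<forall>\<^sub>F \<epsilon> in at_right 0. \<forall>k\<in>{1..s}. \<forall>x. rho \<epsilon> k x =
           (\<rho>n0 x + \<epsilon>\<^sup>2 * \<rho>n2 x) - \<Delta>t * (\<Sum>l\<in>{1..k}. A k l * dive (q \<epsilon> l) x)"
    and stage_q: "\<forall>\<^sub>F \<epsilon> in at_right 0. \<forall>k\<in>{1..s}. \<forall>x. q \<epsilon> k x =
           (\<rho>n0 x + \<epsilon>\<^sup>2 * \<rho>n2 x) *\<^sub>R (un0 x + \<epsilon> *\<^sub>R un1 x)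
           - \<Delta>t *\<^sub>R (\<Sum>l\<in>{1..k-1}. At k l *\<^sub>R
                divT (\<lambda>y i j. otimes (q \<epsilon> l y) (q \<epsilon> l y) i j / rho \<epsilon> l y) x)
           - (\<Delta>t / \<epsilon>\<^sup>2) *\<^sub>R (\<Sum>l\<in>{1..k}. A k l *\<^sub>R grad (\<lambda>y. pres \<gamma> (rho \<epsilon> l y)) x)"
    and coeff_smooth: "\<And>k. k \<in> {1..s} \<Longrightarrow> smooth_fun (rho0 k) \<and> smooth_fun (rho1 k)
        \<and> smooth_fun (rho2 k) \<and> smooth_fun (u0 k) \<and> smooth_fun (u1 k) \<and> smooth_fun (u2 k)"
    and u0_periodic: "\<And>k. k \<in> {1..s} \<Longrightarrow> periodic_torus (u0 k)"
    and exp_rho: "\<And>k. k \<in> {1..s} \<Longrightarrow> expansion (\<lambda>\<epsilon>. rho \<epsilon> k) (rho0 k) (rho1 k) (rho2 k)"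
    and exp_u: "\<And>k. k \<in> {1..s} \<Longrightarrow>
        expansion (\<lambda>\<epsilon> x. (1 / rho \<epsilon> k x) *\<^sub>R q \<epsilon> k x) (u0 k) (u1 k) (u2 k)"
begin

lemma A_above_diagonal: "k \<in> {1..s} \<Longrightarrow> l \<in> {1..s} \<Longrightarrow> k < l \<Longrightarrow> A k l = 0"
  using scheme by (simp add: DIRK_IMEX_def)

lemma sum_lower_triangular:
  fixes f :: "nat \<Rightarrow> 'a::real_vector"
  assumes "k \<in> {1..s}"
  shows "(\<Sum>l\<in>{1..k}. A k l *\<^sub>R f l) = (\<Sum>l\<in>{1..s}. A k l *\<^sub>R f l)"
  using assms A_above_diagonal by (intro sum.mono_neutral_left) auto

definition rho_bar :: real where
  "rho_bar = \<rho>n0 0"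

lemma rho_n0_eq: "\<rho>n0 x = rho_bar"
proof -
  have "pd i \<rho>n0 y = 0" for i y
    using grad_rho_n0[of y] by (simp add: grad_def vec_eq_iff)
  then show ?thesis
    unfolding rho_bar_def by (rule constant_if_pd_zero[OF smooth_fun_differentiable[OF smooth_rho_n0]])
qed

lemma rho_bar_pos: "rho_bar > 0"
  using rho_n0_pos rho_n0_eq by metis

lemma coeff_differentiable:
  assumes "k \<in> {1..s}"
  shows "rho0 k differentiable at x" "rho1 k differentiable at x" "rho2 k differentiable at x"
    "u0 k differentiable at x" "u1 k differentiable at x" "u2 k differentiable at x"
  using coeff_smooth[OF assms] by (auto intro: smooth_fun_differentiable)

definition vel :: "real \<Rightarrow> nat \<Rightarrow> real^'d \<Rightarrow> real^'d" where
  "vel \<epsilon> k y = (1 / rho \<epsilon> k y) *\<^sub>R q \<epsilon> k y"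

lemma exp_vel: "k \<in> {1..s} \<Longrightarrow> expansion (\<lambda>\<epsilon>. vel \<epsilon> k) (u0 k) (u1 k) (u2 k)"
  using exp_u by (simp add: vel_def[abs_def])

lemma eventually_q_eq: "\<forall>\<^sub>F \<epsilon> in at_right 0. \<forall>k\<in>{1..s}. q \<epsilon> k = (\<lambda>y. rho \<epsilon> k y *\<^sub>R vel \<epsilon> k y)"
  using stage_pos by eventually_elim (auto simp: vel_def fun_eq_iff less_imp_neq[symmetric])

lemma eventually_stage_differentiable:
  "\<forall>\<^sub>F \<epsilon> in at_right 0. \<forall>k\<in>{1..s}. \<forall>y. rho \<epsilon> k differentiable at y \<and> vel \<epsilon> k differentiable at y"
proof (rule eventually_ball_finite[OF finite_atLeastAtMost, rule_format])
  fix k assume k: "k \<in> {1..s}"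
  show "\<forall>\<^sub>F \<epsilon> in at_right 0. \<forall>y. rho \<epsilon> k differentiable at y \<and> vel \<epsilon> k differentiable at y"
    using expansion_differentiable[OF exp_rho[OF k] coeff_differentiable(1-3)[OF k]]
      expansion_differentiable[OF exp_vel[OF k] coeff_differentiable(4-6)[OF k]]
    by eventually_elim blast
qed

lemma rho_tendsto: "k \<in> {1..s} \<Longrightarrow> ((\<lambda>\<epsilon>. rho \<epsilon> k x) \<longlongrightarrow> rho0 k x) (at_right 0)"
  by (rule tendsto_of_quadratic_expansion(1)[OF expansion_remainder[OF exp_rho]])

lemma pd_rho_remainder:
  "k \<in> {1..s} \<Longrightarrow> ((\<lambda>\<epsilon>. (1 / \<epsilon>\<^sup>2) *\<^sub>R (pd i (rho \<epsilon> k) x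
     - (pd i (rho0 k) x + \<epsilon> *\<^sub>R pd i (rho1 k) x + \<epsilon>\<^sup>2 *\<^sub>R pd i (rho2 k) x))) \<longlongrightarrow> 0) (at_right 0)"
  by (rule expansion_pd_remainder[OF exp_rho coeff_differentiable(1-3)])

lemma pd_rho_tendsto: "k \<in> {1..s} \<Longrightarrow> ((\<lambda>\<epsilon>. pd i (rho \<epsilon> k) x) \<longlongrightarrow> pd i (rho0 k) x) (at_right 0)"
  by (rule tendsto_of_quadratic_expansion(1)[OF pd_rho_remainder])

lemma vel_tendsto: "k \<in> {1..s} \<Longrightarrow> ((\<lambda>\<epsilon>. vel \<epsilon> k x) \<longlongrightarrow> u0 k x) (at_right 0)"
  by (rule tendsto_of_quadratic_expansion(1)[OF expansion_remainder[OF exp_vel]])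

lemma pd_vel_tendsto: "k \<in> {1..s} \<Longrightarrow> ((\<lambda>\<epsilon>. pd i (vel \<epsilon> k) x) \<longlongrightarrow> pd i (u0 k) x) (at_right 0)"
  by (rule tendsto_of_quadratic_expansion(1)[OF expansion_pd_remainder[OF exp_vel coeff_differentiable(4-6)]])

lemma rho0_nonneg: "k \<in> {1..s} \<Longrightarrow> rho0 k x \<ge> 0"
  using stage_pos
  by (intro tendsto_lowerbound[OF rho_tendsto]) (auto elim!: eventually_mono intro: less_imp_le)

lemma q_tendsto: "k \<in> {1..s} \<Longrightarrow> ((\<lambda>\<epsilon>. q \<epsilon> k x) \<longlongrightarrow> rho0 k x *\<^sub>R u0 k x) (at_right 0)"
proof -
  assume k: "k \<in> {1..s}"
  have "\<forall>\<^sub>F \<epsilon> in at_right 0. rho \<epsilon> k x *\<^sub>R vel \<epsilon> k x = q \<epsilon> k x"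
    using eventually_q_eq by eventually_elim (use k in auto)
  with tendsto_scaleR[OF rho_tendsto[OF k, of x] vel_tendsto[OF k, of x]] show ?thesis
    by (rule Lim_transform_eventually)
qed

lemma dive_q_tendsto:
  assumes l: "l \<in> {1..s}"
  shows "((\<lambda>\<epsilon>. dive (q \<epsilon> l) x) \<longlongrightarrow> dive (\<lambda>y. rho0 l y *\<^sub>R u0 l y) x) (at_right 0)"
proof -
  have "((\<lambda>\<epsilon>. \<Sum>i\<in>UNIV. rho \<epsilon> l x * pd i (vel \<epsilon> l) x $ i + pd i (rho \<epsilon> l) x * vel \<epsilon> l x $ i)
     \<longlongrightarrow> (\<Sum>i\<in>UNIV. rho0 l x * pd i (u0 l) x $ i + pd i (rho0 l) x * u0 l x $ i)) (at_right 0)"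
    using l by (intro tendsto_intros rho_tendsto pd_rho_tendsto vel_tendsto pd_vel_tendsto)
  moreover have "\<forall>\<^sub>F \<epsilon> in at_right 0. (\<Sum>i\<in>UNIV. rho \<epsilon> l x * pd i (vel \<epsilon> l) x $ i
      + pd i (rho \<epsilon> l) x * vel \<epsilon> l x $ i) = dive (q \<epsilon> l) x"
    using eventually_q_eq eventually_stage_differentiable
    by eventually_elim (use l in \<open>simp add: dive_scaleR\<close>)
  ultimately show ?thesis
    using dive_scaleR[OF coeff_differentiable(1,4)[OF l]] by (simp add: Lim_transform_eventually)
qed

definition flux :: "real \<Rightarrow> nat \<Rightarrow> real^'d \<Rightarrow> real^'d" where
  "flux \<epsilon> l x = divT (\<lambda>y i j. otimes (q \<epsilon> l y) (q \<epsilon> l y) i j / rho \<epsilon> l y) x"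

definition flux0 :: "nat \<Rightarrow> real^'d \<Rightarrow> real^'d" where
  "flux0 l x = divT (\<lambda>y i j. rho0 l y * otimes (u0 l y) (u0 l y) i j) x"

lemma flux_tendsto:
  assumes l: "l \<in> {1..s}"
  shows "((\<lambda>\<epsilon>. flux \<epsilon> l x) \<longlongrightarrow> flux0 l x) (at_right 0)"
proof (rule vec_tendstoI)
  fix j
  let ?F = "\<lambda>r v. \<Sum>i\<in>UNIV. r x * (v x $ i * pd i v x $ j + pd i v x $ i * v x $ j)
                        + pd i r x * (v x $ i * v x $ j)"
  have "((\<lambda>\<epsilon>. ?F (rho \<epsilon> l) (vel \<epsilon> l)) \<longlongrightarrow> ?F (rho0 l) (u0 l)) (at_right 0)"
    using l by (intro tendsto_intros rho_tendsto pd_rho_tendsto vel_tendsto pd_vel_tendsto)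
  moreover have "\<forall>\<^sub>F \<epsilon> in at_right 0. ?F (rho \<epsilon> l) (vel \<epsilon> l) = flux \<epsilon> l x $ j"
    using eventually_q_eq eventually_stage_differentiable stage_pos
  proof eventually_elim
    case (elim \<epsilon>)
    then have "(\<lambda>y i j. otimes (q \<epsilon> l y) (q \<epsilon> l y) i j / rho \<epsilon> l y)
        = (\<lambda>y i j. rho \<epsilon> l y * otimes (vel \<epsilon> l y) (vel \<epsilon> l y) i j)"
      using l by (auto simp: fun_eq_iff otimes_def field_simps less_imp_neq[symmetric])
    then show ?case using elim l by (simp add: flux_def divT_scaled_otimes)
  qed
  ultimately show "((\<lambda>\<epsilon>. flux \<epsilon> l x $ j) \<longlongrightarrow> flux0 l x $ j) (at_right 0)"
    using divT_scaled_otimes[OF coeff_differentiable(1,4)[OF l]]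
    by (simp add: flux0_def Lim_transform_eventually)
qed

definition pgrad :: "real \<Rightarrow> nat \<Rightarrow> real^'d \<Rightarrow> real^'d" where
  "pgrad \<epsilon> l x = grad (\<lambda>y. pres \<gamma> (rho \<epsilon> l y)) x"

lemma eventually_pgrad:
  "\<forall>\<^sub>F \<epsilon> in at_right 0. \<forall>l\<in>{1..s}. \<forall>x.
     pgrad \<epsilon> l x = (\<gamma> * rho \<epsilon> l x powr (\<gamma> - 1)) *\<^sub>R grad (rho \<epsilon> l) x"
  using eventually_stage_differentiable stage_pos
  by eventually_elim (simp add: pgrad_def grad_def pres_def pd_powr vec_eq_iff)

definition pressure_limit :: "nat \<Rightarrow> real^'d \<Rightarrow> real^'d" where
  "pressure_limit k x = (1 / \<Delta>t) *\<^sub>R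
     (rho_bar *\<^sub>R un0 x - \<Delta>t *\<^sub>R (\<Sum>l\<in>{1..k-1}. At k l *\<^sub>R flux0 l x) - rho0 k x *\<^sub>R u0 k x)"

text \<open>The momentum equation of stage k, solved for its stiff pressure term.\<close>

lemma scaled_pgrad_combination_tendsto:
  assumes k: "k \<in> {1..s}"
  shows "((\<lambda>\<epsilon>. \<Sum>l\<in>{1..s}. A k l *\<^sub>R ((1 / \<epsilon>\<^sup>2) *\<^sub>R pgrad \<epsilon> l x)) \<longlongrightarrow> pressure_limit k x) (at_right 0)"
proof -
  define D where "D \<epsilon> = (rho_bar + \<epsilon>\<^sup>2 * \<rho>n2 x) *\<^sub>R (un0 x + \<epsilon> *\<^sub>R un1 x)" for \<epsilon>
  have "((\<lambda>\<epsilon>. (1 / \<Delta>t) *\<^sub>R (D \<epsilon> - \<Delta>t *\<^sub>R (\<Sum>l\<in>{1..k-1}. At k l *\<^sub>R flux \<epsilon> l x) - q \<epsilon> k x))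
      \<longlongrightarrow> (1 / \<Delta>t) *\<^sub>R (D 0 - \<Delta>t *\<^sub>R (\<Sum>l\<in>{1..k-1}. At k l *\<^sub>R flux0 l x) - rho0 k x *\<^sub>R u0 k x))
      (at_right 0)"
    unfolding D_def using k
    by (intro tendsto_intros tendsto_ident_at flux_tendsto q_tendsto) auto
  moreover have "\<forall>\<^sub>F \<epsilon> in at_right 0.
      (1 / \<Delta>t) *\<^sub>R (D \<epsilon> - \<Delta>t *\<^sub>R (\<Sum>l\<in>{1..k-1}. At k l *\<^sub>R flux \<epsilon> l x) - q \<epsilon> k x)
      = (\<Sum>l\<in>{1..s}. A k l *\<^sub>R ((1 / \<epsilon>\<^sup>2) *\<^sub>R pgrad \<epsilon> l x))"
    using stage_q
  proof eventually_elim
    case (elim \<epsilon>)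
    then have "D \<epsilon> - \<Delta>t *\<^sub>R (\<Sum>l\<in>{1..k-1}. At k l *\<^sub>R flux \<epsilon> l x) - q \<epsilon> k x
        = (\<Delta>t / \<epsilon>\<^sup>2) *\<^sub>R (\<Sum>l\<in>{1..k}. A k l *\<^sub>R pgrad \<epsilon> l x)"
      using k by (simp add: D_def flux_def pgrad_def rho_n0_eq)
    then show ?case
      using dt_pos sum_lower_triangular[OF k, of "\<lambda>l. (1 / \<epsilon>\<^sup>2) *\<^sub>R pgrad \<epsilon> l x"]
      by (simp add: scaleR_sum_right)
  qed
  ultimately show ?thesis
    by (simp add: pressure_limit_def D_def Lim_transform_eventually)
qed

lemma first_stage_CK:
  assumes "type_CK s A"
  shows "\<forall>\<^sub>F \<epsilon> in at_right 0. rho \<epsilon> 1 = (\<lambda>y. \<rho>n0 y + \<epsilon>\<^sup>2 * \<rho>n2 y) \<and> vel \<epsilon> 1 = (\<lambda>y. un0 y + \<epsilon> *\<^sub>R un1 y)"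
proof -
  have "1 \<in> {1..s}" and "A 1 1 = 0" using assms by (auto simp: type_CK_def)
  show ?thesis
    using stage_rho stage_q stage_pos
  proof eventually_elim
    case (elim \<epsilon>)
    have "rho \<epsilon> 1 y = \<rho>n0 y + \<epsilon>\<^sup>2 * \<rho>n2 y" for y
      using elim(1)[rule_format, OF \<open>1 \<in> {1..s}\<close>, of y] \<open>A 1 1 = 0\<close> by simp
    moreover have "q \<epsilon> 1 y = (\<rho>n0 y + \<epsilon>\<^sup>2 * \<rho>n2 y) *\<^sub>R (un0 y + \<epsilon> *\<^sub>R un1 y)" for y
      using elim(2)[rule_format, OF \<open>1 \<in> {1..s}\<close>, of y] \<open>A 1 1 = 0\<close> by simp
    moreover have "rho \<epsilon> 1 y \<noteq> 0" for y
      using elim(3) \<open>1 \<in> {1..s}\<close> by (metis less_irrefl)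
    ultimately show ?case by (simp add: vel_def fun_eq_iff)
  qed
qed

lemma u0_first_stage_CK:
  assumes "type_CK s A"
  shows "u0 1 = un0"
proof
  fix y
  have "1 \<in> {1..s}" using assms by (auto simp: type_CK_def)
  have "\<forall>\<^sub>F \<epsilon> in at_right 0. un0 y + \<epsilon> *\<^sub>R un1 y = vel \<epsilon> 1 y"
    using first_stage_CK[OF assms] by eventually_elim simp
  moreover have "((\<lambda>\<epsilon>. un0 y + \<epsilon> *\<^sub>R un1 y) \<longlongrightarrow> un0 y + 0 *\<^sub>R un1 y) (at_right 0)"
    by (intro tendsto_intros tendsto_ident_at)
  ultimately have "((\<lambda>\<epsilon>. vel \<epsilon> 1 y) \<longlongrightarrow> un0 y) (at_right 0)"
    by (simp add: Lim_transform_eventually)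
  from tendsto_unique[OF trivial_limit_at_right_real vel_tendsto[OF \<open>1 \<in> {1..s}\<close>] this]
  show "u0 1 y = un0 y" .
qed

lemma scaled_pgrad_first_stage_CK:
  assumes "type_CK s A"
  shows "((\<lambda>\<epsilon>. (1 / \<epsilon>\<^sup>2) *\<^sub>R pgrad \<epsilon> 1 x) \<longlongrightarrow> (\<gamma> * rho_bar powr (\<gamma> - 1)) *\<^sub>R grad \<rho>n2 x) (at_right 0)"
proof -
  have "1 \<in> {1..s}" using assms by (auto simp: type_CK_def)
  have grad_first: "grad (\<lambda>y. rho_bar + \<epsilon>\<^sup>2 * \<rho>n2 y) x = \<epsilon>\<^sup>2 *\<^sub>R grad \<rho>n2 x" for \<epsilon>
    using smooth_rho_n2 by (simp add: grad_def vec_eq_iff pd_const pd_add pd_cmult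
        smooth_fun_differentiable differentiable_mult differentiable_const)
  have "\<forall>\<^sub>F \<epsilon> in at_right 0. (\<gamma> * (rho_bar + \<epsilon>\<^sup>2 * \<rho>n2 x) powr (\<gamma> - 1)) *\<^sub>R grad \<rho>n2 x
      = (1 / \<epsilon>\<^sup>2) *\<^sub>R pgrad \<epsilon> 1 x"
    using first_stage_CK[OF assms] eventually_pgrad eventually_at_right_less[of 0]
  proof eventually_elim
    case (elim \<epsilon>)
    from elim(2) \<open>1 \<in> {1..s}\<close>
    have "pgrad \<epsilon> 1 x = (\<gamma> * rho \<epsilon> 1 x powr (\<gamma> - 1)) *\<^sub>R grad (rho \<epsilon> 1) x" by blast
    also have "\<dots> = (\<gamma> * (rho_bar + \<epsilon>\<^sup>2 * \<rho>n2 x) powr (\<gamma> - 1)) *\<^sub>R (\<epsilon>\<^sup>2 *\<^sub>R grad \<rho>n2 x)"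
      using elim(1) by (simp only: rho_n0_eq grad_first)
    finally show ?case using elim(3) by simp
  qed
  moreover have "((\<lambda>\<epsilon>. rho_bar + \<epsilon>\<^sup>2 * \<rho>n2 x) \<longlongrightarrow> rho_bar + 0\<^sup>2 * \<rho>n2 x) (at_right 0)"
    by (intro tendsto_intros tendsto_ident_at)
  then have "((\<lambda>\<epsilon>. rho_bar + \<epsilon>\<^sup>2 * \<rho>n2 x) \<longlongrightarrow> rho_bar) (at_right 0)" by simp
  then have "((\<lambda>\<epsilon>. (rho_bar + \<epsilon>\<^sup>2 * \<rho>n2 x) powr (\<gamma> - 1)) \<longlongrightarrow> rho_bar powr (\<gamma> - 1)) (at_right 0)"
    by (rule tendsto_powr[OF _ tendsto_const]) (use rho_bar_pos in simp)
  then have "((\<lambda>\<epsilon>. (\<gamma> * (rho_bar + \<epsilon>\<^sup>2 * \<rho>n2 x) powr (\<gamma> - 1)) *\<^sub>R grad \<rho>n2 x)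
      \<longlongrightarrow> (\<gamma> * rho_bar powr (\<gamma> - 1)) *\<^sub>R grad \<rho>n2 x) (at_right 0)"
    by (intro tendsto_scaleR[OF _ tendsto_const] tendsto_mult_left)
  ultimately show ?thesis by (simp add: Lim_transform_eventually)
qed

lemma scaled_pgrad_convergent:
  assumes l: "l \<in> {1..s}"
  shows "\<exists>M. ((\<lambda>\<epsilon>. (1 / \<epsilon>\<^sup>2) *\<^sub>R pgrad \<epsilon> l x) \<longlongrightarrow> M) (at_right 0)"
proof -
  let ?z = "\<lambda>l \<epsilon>. (1 / \<epsilon>\<^sup>2) *\<^sub>R pgrad \<epsilon> l x"
  have "(\<lambda>g. \<exists>M. (g \<longlongrightarrow> M) (at_right 0)) (?z l)"
  proof (rule imex_stage_values_preserve[where P = "\<lambda>g. \<exists>M. (g \<longlongrightarrow> M) (at_right 0)" and z = ?z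
        and h = "\<lambda>k \<epsilon>. \<Sum>l\<in>{1..s}. A k l *\<^sub>R ?z l \<epsilon>", OF scheme_type refl _ _ _ _ _ l])
    show "\<exists>M. ((\<lambda>\<epsilon>. \<Sum>l\<in>{1..s}. A k l *\<^sub>R ?z l \<epsilon>) \<longlongrightarrow> M) (at_right 0)" if "k \<in> {1..s}" for k
      using scaled_pgrad_combination_tendsto[OF that] by blast
    show "\<exists>M. (?z 1 \<longlongrightarrow> M) (at_right 0)" if "type_CK s A"
      using scaled_pgrad_first_stage_CK[OF that] by blast
    show "\<exists>M. ((\<lambda>\<epsilon>. 0) \<longlongrightarrow> M) (at_right 0)"
      by (rule exI, rule tendsto_const)
    show "\<exists>M. ((\<lambda>\<epsilon>. f \<epsilon> + g \<epsilon>) \<longlongrightarrow> M) (at_right 0)"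
      if "\<exists>M. (f \<longlongrightarrow> M) (at_right 0)" "\<exists>M. (g \<longlongrightarrow> M) (at_right 0)" for f g :: "real \<Rightarrow> real^'d"
      using that by (auto dest: tendsto_add)
    show "\<exists>M. ((\<lambda>\<epsilon>. c *\<^sub>R f \<epsilon>) \<longlongrightarrow> M) (at_right 0)" if "\<exists>M. (f \<longlongrightarrow> M) (at_right 0)" for c and f :: "real \<Rightarrow> real^'d"
    proof -
      from that obtain M where "(f \<longlongrightarrow> M) (at_right 0)" ..
      then have "((\<lambda>\<epsilon>. c *\<^sub>R f \<epsilon>) \<longlongrightarrow> c *\<^sub>R M) (at_right 0)" by (intro tendsto_scaleR tendsto_const)
      then show ?thesis ..
    qed
  qed
  then show ?thesis by simp
qed

lemma pressure_factor_tendsto: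
  assumes "l \<in> {1..s}" "rho0 l x > 0"
  shows "((\<lambda>\<epsilon>. \<gamma> * rho \<epsilon> l x powr (\<gamma> - 1)) \<longlongrightarrow> \<gamma> * rho0 l x powr (\<gamma> - 1)) (at_right 0)"
proof -
  have "((\<lambda>\<epsilon>. rho \<epsilon> l x powr (\<gamma> - 1)) \<longlongrightarrow> rho0 l x powr (\<gamma> - 1)) (at_right 0)"
    by (rule tendsto_powr[OF rho_tendsto[OF assms(1)] tendsto_const]) (use assms(2) in simp)
  then show ?thesis by (rule tendsto_mult_left)
qed

lemma pd_rho0_zero:
  assumes l: "l \<in> {1..s}"
  shows "pd i (rho0 l) x = 0"
proof (cases "rho0 l x > 0")
  case True
  obtain M where "((\<lambda>\<epsilon>. (1 / \<epsilon>\<^sup>2) *\<^sub>R pgrad \<epsilon> l x) \<longlongrightarrow> M) (at_right 0)"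
    using scaled_pgrad_convergent[OF l] by blast
  from tendsto_vec_nth[OF tendsto_zero_of_scaled_convergent(1)[OF this], of i]
  have "((\<lambda>\<epsilon>. pgrad \<epsilon> l x $ i) \<longlongrightarrow> 0) (at_right 0)" by simp
  moreover have "\<forall>\<^sub>F \<epsilon> in at_right 0. pgrad \<epsilon> l x $ i = \<gamma> * rho \<epsilon> l x powr (\<gamma> - 1) * pd i (rho \<epsilon> l) x"
    using eventually_pgrad by eventually_elim (use l in \<open>simp add: grad_def\<close>)
  ultimately have "((\<lambda>\<epsilon>. \<gamma> * rho \<epsilon> l x powr (\<gamma> - 1) * pd i (rho \<epsilon> l) x) \<longlongrightarrow> 0) (at_right 0)"
    by (rule Lim_transform_eventually)
  with tendsto_mult[OF pressure_factor_tendsto[OF l True] pd_rho_tendsto[OF l]]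
  have "\<gamma> * rho0 l x powr (\<gamma> - 1) * pd i (rho0 l) x = 0"
    by (rule tendsto_unique[OF trivial_limit_at_right_real])
  then show ?thesis using gamma_pos True by simp
next
  case False
  \<comment> \<open>then \<open>rho0 l\<close> attains its minimum \<open>0\<close> at \<open>x\<close>\<close>
  then have "rho0 l x \<le> rho0 l y" for y using rho0_nonneg[OF l] by (simp add: not_less order_trans)
  then show ?thesis by (rule pd_zero_at_min[OF coeff_differentiable(1)[OF l]])
qed

lemma rho0_const: "l \<in> {1..s} \<Longrightarrow> rho0 l x = rho0 l 0"
  by (rule constant_if_pd_zero[OF coeff_differentiable(1) pd_rho0_zero])

lemma leading_mass_balance:
  assumes k: "k \<in> {1..s}"
  shows "(\<Sum>l\<in>{1..s}. A k l *\<^sub>R (rho0 l 0 * dive (u0 l) x)) = (rho_bar - rho0 k 0) / \<Delta>t"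
proof -
  have div_eq: "dive (\<lambda>y. rho0 l y *\<^sub>R u0 l y) x = rho0 l 0 * dive (u0 l) x" if "l \<in> {1..s}" for l
  proof -
    have "dive (\<lambda>y. rho0 l y *\<^sub>R u0 l y) x
        = (\<Sum>i\<in>UNIV. rho0 l x * pd i (u0 l) x $ i + pd i (rho0 l) x * u0 l x $ i)"
      by (rule dive_scaleR[OF coeff_differentiable(1,4)[OF that]])
    also have "\<dots> = rho0 l 0 * dive (u0 l) x"
      using that by (simp add: pd_rho0_zero rho0_const[of l x] dive_def pd_component
          coeff_differentiable sum_distrib_left)
    finally show ?thesis .
  qed
  have sum_lim: "((\<lambda>\<epsilon>. \<Sum>l\<in>{1..k}. A k l * dive (q \<epsilon> l) x)
      \<longlongrightarrow> (\<Sum>l\<in>{1..k}. A k l * dive (\<lambda>y. rho0 l y *\<^sub>R u0 l y) x)) (at_right 0)"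
    using k by (intro tendsto_sum tendsto_mult_left dive_q_tendsto) auto
  have "((\<lambda>\<epsilon>. \<rho>n0 x + \<epsilon>\<^sup>2 * \<rho>n2 x) \<longlongrightarrow> \<rho>n0 x + 0\<^sup>2 * \<rho>n2 x) (at_right 0)"
    by (intro tendsto_intros tendsto_ident_at)
  from tendsto_diff[OF this tendsto_mult_left[OF sum_lim]]
  have "((\<lambda>\<epsilon>. (\<rho>n0 x + \<epsilon>\<^sup>2 * \<rho>n2 x) - \<Delta>t * (\<Sum>l\<in>{1..k}. A k l * dive (q \<epsilon> l) x))
      \<longlongrightarrow> (\<rho>n0 x + 0\<^sup>2 * \<rho>n2 x) - \<Delta>t * (\<Sum>l\<in>{1..k}. A k l * dive (\<lambda>y. rho0 l y *\<^sub>R u0 l y) x))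
      (at_right 0)" .
  moreover have "\<forall>\<^sub>F \<epsilon> in at_right 0.
      (\<rho>n0 x + \<epsilon>\<^sup>2 * \<rho>n2 x) - \<Delta>t * (\<Sum>l\<in>{1..k}. A k l * dive (q \<epsilon> l) x) = rho \<epsilon> k x"
    using stage_rho by (rule eventually_mono) (metis k)
  ultimately have "((\<lambda>\<epsilon>. rho \<epsilon> k x)
      \<longlongrightarrow> \<rho>n0 x + 0\<^sup>2 * \<rho>n2 x - \<Delta>t * (\<Sum>l\<in>{1..k}. A k l * dive (\<lambda>y. rho0 l y *\<^sub>R u0 l y) x))
      (at_right 0)"
    by (rule Lim_transform_eventually)
  from tendsto_unique[OF trivial_limit_at_right_real rho_tendsto[OF k] this]
  have "rho0 k x = rho_bar - \<Delta>t * (\<Sum>l\<in>{1..k}. A k l * dive (\<lambda>y. rho0 l y *\<^sub>R u0 l y) x)"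
    by (simp add: rho_n0_eq)
  also have "(\<Sum>l\<in>{1..k}. A k l * dive (\<lambda>y. rho0 l y *\<^sub>R u0 l y) x)
      = (\<Sum>l\<in>{1..s}. A k l *\<^sub>R (rho0 l 0 * dive (u0 l) x))"
    using sum_lower_triangular[OF k, of "\<lambda>l. dive (\<lambda>y. rho0 l y *\<^sub>R u0 l y) x"] div_eq by simp
  finally show ?thesis
    using dt_pos rho0_const[OF k, of x] by (simp add: field_simps)
qed

lemma leading_mass_flux_zero:
  assumes l: "l \<in> {1..s}"
  shows "rho0 l 0 * dive (u0 l) x = 0"
proof -
  have "(\<lambda>f. \<exists>c. \<forall>x. f x = c) (\<lambda>x. rho0 l 0 * dive (u0 l) x)"
  proof (rule imex_stage_values_preserve[where P = "\<lambda>f. \<exists>c. \<forall>x. f x = c"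
        and z = "\<lambda>l x. rho0 l 0 * dive (u0 l) x" and h = "\<lambda>k x. (rho_bar - rho0 k 0) / \<Delta>t",
        OF scheme_type _ _ _ _ _ _ l])
    show "\<And>k x. k \<in> {1..s} \<Longrightarrow> (\<Sum>l\<in>{1..s}. A k l *\<^sub>R (rho0 l 0 * dive (u0 l) x)) = (rho_bar - rho0 k 0) / \<Delta>t"
      by (rule leading_mass_balance)
    show "\<exists>c. \<forall>x. rho0 1 0 * dive (u0 1) x = c" if "type_CK s A"
      using div_u_n0 u0_first_stage_CK[OF that] by auto
  qed auto
  then obtain K where K: "\<And>x. rho0 l 0 * dive (u0 l) x = K" by blast
  show ?thesis
  proof (cases "rho0 l 0 = 0")
    case False
    then have "dive (u0 l) x = K / rho0 l 0" for x using K[of x] by (simp add: field_simps)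
    then have "K / rho0 l 0 = 0"
      using coeff_smooth[OF l] u0_periodic[OF l] by (blast intro: periodic_divergence_const_eq_zero)
    then show ?thesis using False K by simp
  qed simp
qed

lemma rho0_eq_rho_bar: "k \<in> {1..s} \<Longrightarrow> rho0 k x = rho_bar"
  using leading_mass_balance[of k 0] leading_mass_flux_zero dt_pos rho0_const[of k x] by simp

lemma div_u0_zero: "l \<in> {1..s} \<Longrightarrow> dive (u0 l) x = 0"
  using leading_mass_flux_zero[of l x] rho0_eq_rho_bar[of l 0] rho_bar_pos by simp

lemma pd_rho1_zero:
  assumes l: "l \<in> {1..s}"
  shows "pd i (rho1 l) x = 0"
proof -
  have pos: "rho0 l x > 0" using rho0_eq_rho_bar[OF l] rho_bar_pos by simp
  obtain M where "((\<lambda>\<epsilon>. (1 / \<epsilon>\<^sup>2) *\<^sub>R pgrad \<epsilon> l x) \<longlongrightarrow> M) (at_right 0)"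
    using scaled_pgrad_convergent[OF l] by blast
  from tendsto_vec_nth[OF tendsto_zero_of_scaled_convergent(2)[OF this], of i]
  have "((\<lambda>\<epsilon>. (1 / \<epsilon>) * pgrad \<epsilon> l x $ i) \<longlongrightarrow> 0) (at_right 0)" by simp
  moreover have "\<forall>\<^sub>F \<epsilon> in at_right 0. (1 / \<epsilon>) * pgrad \<epsilon> l x $ i
      = \<gamma> * rho \<epsilon> l x powr (\<gamma> - 1) * ((1 / \<epsilon>) *\<^sub>R pd i (rho \<epsilon> l) x)"
    using eventually_pgrad by eventually_elim (use l in \<open>simp add: grad_def\<close>)
  ultimately have "((\<lambda>\<epsilon>. \<gamma> * rho \<epsilon> l x powr (\<gamma> - 1) * ((1 / \<epsilon>) *\<^sub>R pd i (rho \<epsilon> l) x)) \<longlongrightarrow> 0)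
      (at_right 0)"
    by (rule Lim_transform_eventually)
  with tendsto_mult[OF pressure_factor_tendsto[OF l pos] tendsto_of_quadratic_expansion(2)[OF
          pd_rho_remainder[OF l] pd_rho0_zero[OF l]]]
  have "\<gamma> * rho0 l x powr (\<gamma> - 1) * pd i (rho1 l) x = 0"
    by (rule tendsto_unique[OF trivial_limit_at_right_real])
  then show ?thesis using gamma_pos pos by simp
qed

lemma rho1_const: "l \<in> {1..s} \<Longrightarrow> rho1 l x = rho1 l 0"
  by (rule constant_if_pd_zero[OF coeff_differentiable(2) pd_rho1_zero])

lemma scaled_pgrad_tendsto:
  assumes l: "l \<in> {1..s}"
  shows "((\<lambda>\<epsilon>. (1 / \<epsilon>\<^sup>2) *\<^sub>R pgrad \<epsilon> l x) \<longlongrightarrow> (\<gamma> * rho_bar powr (\<gamma> - 1)) *\<^sub>R grad (rho2 l) x)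
           (at_right 0)"
proof (rule vec_tendstoI)
  fix i
  have "((\<lambda>\<epsilon>. \<gamma> * rho \<epsilon> l x powr (\<gamma> - 1) * ((1 / \<epsilon>\<^sup>2) *\<^sub>R pd i (rho \<epsilon> l) x))
      \<longlongrightarrow> \<gamma> * rho_bar powr (\<gamma> - 1) * pd i (rho2 l) x) (at_right 0)"
    using tendsto_mult[OF pressure_factor_tendsto[OF l] tendsto_of_quadratic_expansion(3)[OF
          pd_rho_remainder[OF l] pd_rho0_zero[OF l] pd_rho1_zero[OF l]]] rho_bar_pos
    unfolding rho0_eq_rho_bar[OF l] by blast
  moreover have "\<forall>\<^sub>F \<epsilon> in at_right 0. \<gamma> * rho \<epsilon> l x powr (\<gamma> - 1) * ((1 / \<epsilon>\<^sup>2) *\<^sub>R pd i (rho \<epsilon> l) x)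
      = ((1 / \<epsilon>\<^sup>2) *\<^sub>R pgrad \<epsilon> l x) $ i"
    using eventually_pgrad by eventually_elim (use l in \<open>simp add: grad_def\<close>)
  ultimately have "((\<lambda>\<epsilon>. ((1 / \<epsilon>\<^sup>2) *\<^sub>R pgrad \<epsilon> l x) $ i)
      \<longlongrightarrow> \<gamma> * rho_bar powr (\<gamma> - 1) * pd i (rho2 l) x) (at_right 0)"
    by (rule Lim_transform_eventually)
  then show "((\<lambda>\<epsilon>. ((1 / \<epsilon>\<^sup>2) *\<^sub>R pgrad \<epsilon> l x) $ i)
      \<longlongrightarrow> ((\<gamma> * rho_bar powr (\<gamma> - 1)) *\<^sub>R grad (rho2 l) x) $ i) (at_right 0)"
    by (simp add: grad_def)
qed

lemma grad_pres2:
  assumes l: "l \<in> {1..s}"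
  shows "grad (\<lambda>y. pres2 \<gamma> (rho0 l y) (rho1 l y) (rho2 l y)) x
    = (\<gamma> * rho_bar powr (\<gamma> - 1)) *\<^sub>R grad (rho2 l) x"
proof -
  define b where "b = \<gamma> * (\<gamma> - 1) / 2 * rho_bar powr (\<gamma> - 2) * (rho1 l 0)\<^sup>2"
  have "(\<lambda>y. pres2 \<gamma> (rho0 l y) (rho1 l y) (rho2 l y)) = (\<lambda>y. \<gamma> * rho_bar powr (\<gamma> - 1) * rho2 l y + b)"
  proof
    fix y
    have "rho1 l y = rho1 l 0" by (rule rho1_const[OF l])
    then show "pres2 \<gamma> (rho0 l y) (rho1 l y) (rho2 l y) = \<gamma> * rho_bar powr (\<gamma> - 1) * rho2 l y + b"
      by (simp add: pres2_def b_def rho0_eq_rho_bar[OF l])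
  qed
  then show ?thesis
    using coeff_differentiable(3)[OF l]
    by (simp add: grad_def vec_eq_iff pd_add pd_cmult pd_const differentiable_mult differentiable_const)
qed

lemma flux0_eq:
  assumes l: "l \<in> {1..s}"
  shows "flux0 l x = rho_bar *\<^sub>R divT (\<lambda>y. otimes (u0 l y) (u0 l y)) x"
proof -
  have "flux0 l x = divT (\<lambda>y i j. rho_bar * otimes (u0 l y) (u0 l y) i j) x"
    using rho0_eq_rho_bar[OF l] by (simp add: flux0_def)
  also have "\<dots> = rho_bar *\<^sub>R divT (\<lambda>y. otimes (u0 l y) (u0 l y)) x"
    by (rule divT_cmult)
      (simp add: otimes_def coeff_differentiable[OF l] differentiable_component differentiable_mult)
  finally show ?thesis .
qed

lemma leading_velocity_update:
  "u0 s x = un0 x - \<Delta>t *\<^sub>R (\<Sum>l\<in>{1..s-1}. At s l *\<^sub>R divT (\<lambda>y. otimes (u0 l y) (u0 l y)) x)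
     - (\<Delta>t / rho_bar) *\<^sub>R (\<Sum>l\<in>{1..s}. A s l *\<^sub>R grad (\<lambda>y. pres2 \<gamma> (rho0 l y) (rho1 l y) (rho2 l y)) x)"
    (is "_ = un0 x - \<Delta>t *\<^sub>R ?S - (\<Delta>t / rho_bar) *\<^sub>R ?P")
proof -
  have s: "s \<in> {1..s}" using scheme by (simp add: DIRK_IMEX_def)
  have "((\<lambda>\<epsilon>. \<Sum>l\<in>{1..s}. A s l *\<^sub>R ((1 / \<epsilon>\<^sup>2) *\<^sub>R pgrad \<epsilon> l x)) \<longlongrightarrow> ?P) (at_right 0)"
    by (intro tendsto_sum tendsto_scaleR tendsto_const) (simp add: grad_pres2 scaled_pgrad_tendsto)
  then have "pressure_limit s x = ?P"
    by (rule tendsto_unique[OF trivial_limit_at_right_real scaled_pgrad_combination_tendsto[OF s]])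
  moreover have "(\<Sum>l\<in>{1..s-1}. At s l *\<^sub>R flux0 l x) = rho_bar *\<^sub>R ?S"
    unfolding scaleR_sum_right
  proof (intro sum.cong refl)
    fix l assume "l \<in> {1..s-1}"
    then have "l \<in> {1..s}" by auto
    then show "At s l *\<^sub>R flux0 l x = rho_bar *\<^sub>R At s l *\<^sub>R divT (\<lambda>y. otimes (u0 l y) (u0 l y)) x"
      by (simp add: flux0_eq)
  qed
  ultimately have "(1 / \<Delta>t) *\<^sub>R (rho_bar *\<^sub>R (un0 x - \<Delta>t *\<^sub>R ?S - u0 s x)) = ?P"
    by (simp add: pressure_limit_def rho0_eq_rho_bar[OF s] algebra_simps)
  then have "(\<Delta>t / rho_bar) *\<^sub>R ((1 / \<Delta>t) *\<^sub>R (rho_bar *\<^sub>R (un0 x - \<Delta>t *\<^sub>R ?S - u0 s x)))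
      = (\<Delta>t / rho_bar) *\<^sub>R ?P"
    by (rule arg_cong)
  moreover have "(\<Delta>t / rho_bar) *\<^sub>R ((1 / \<Delta>t) *\<^sub>R (rho_bar *\<^sub>R v)) = v" for v :: "real^'d"
    using dt_pos rho_bar_pos by simp
  ultimately have "un0 x - \<Delta>t *\<^sub>R ?S - u0 s x = (\<Delta>t / rho_bar) *\<^sub>R ?P"
    by (simp only:)
  then show ?thesis by (simp add: algebra_simps)
qed

end

section \<open>Globally stiffly accurate update\<close>

lemma GSA_implicit_sum:
  fixes f :: "nat \<Rightarrow> 'a::real_vector"
  assumes "GSA s At A wt w"
  shows "(\<Sum>l\<in>{1..s}. A s l *\<^sub>R f l) = (\<Sum>l\<in>{1..s}. w l *\<^sub>R f l)"
  using assms by (intro sum.cong refl) (simp add: GSA_def)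

lemma GSA_explicit_sum:
  fixes f :: "nat \<Rightarrow> 'a::real_vector"
  assumes "DIRK_IMEX s At A" and "GSA s At A wt w"
  shows "(\<Sum>l\<in>{1..s-1}. At s l *\<^sub>R f l) = (\<Sum>l\<in>{1..s}. wt l *\<^sub>R f l)"
proof -
  have "s \<ge> 1" and "At s s = 0" using assms(1) by (auto simp: DIRK_IMEX_def)
  then have "{1..s} = insert s {1..s-1}" and "s \<notin> {1..s-1}" and "wt s = 0"
    using assms(2) by (auto simp: GSA_def)
  then have "(\<Sum>l\<in>{1..s}. wt l *\<^sub>R f l) = (\<Sum>l\<in>{1..s-1}. wt l *\<^sub>R f l)" by simp
  also have "\<dots> = (\<Sum>l\<in>{1..s-1}. At s l *\<^sub>R f l)"
    using assms(2) \<open>s \<ge> 1\<close> by (intro sum.cong refl) (auto simp: GSA_def)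
  finally show ?thesis by simp
qed

theorem mainTheorem1:
  fixes \<gamma> \<Delta>t :: real and s :: nat
    and At A :: "nat \<Rightarrow> nat \<Rightarrow> real" and wt w :: "nat \<Rightarrow> real"
    and \<rho>n0 \<rho>n2 :: "real^'d::finite \<Rightarrow> real" and un0 un1 :: "real^'d \<Rightarrow> real^'d"
    and rho :: "real \<Rightarrow> nat \<Rightarrow> real^'d \<Rightarrow> real" and q :: "real \<Rightarrow> nat \<Rightarrow> real^'d \<Rightarrow> real^'d"
    and rhoN :: "real \<Rightarrow> real^'d \<Rightarrow> real" and qN :: "real \<Rightarrow> real^'d \<Rightarrow> real^'d"
    and rho0 rho1 rho2 :: "nat \<Rightarrow> real^'d \<Rightarrow> real" and u0 u1 u2 :: "nat \<Rightarrow> real^'d \<Rightarrow> real^'d"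
  assumes gamma_pos: "\<gamma> > 0" and dt_pos: "\<Delta>t > 0"
    and scheme: "DIRK_IMEX s At A" and gsa: "GSA s At A wt w"
    and scheme_type: "type_A s A \<or> type_CK s A"
    and data_smooth: "smooth_fun \<rho>n0" "smooth_fun \<rho>n2" "smooth_fun un0" "smooth_fun un1"
    and data_periodic: "periodic_torus \<rho>n0" "periodic_torus \<rho>n2" "periodic_torus un0" "periodic_torus un1"
    and rho_n0_pos: "\<forall>x. \<rho>n0 x > 0"
    and grad_rho_n0: "\<forall>x. grad \<rho>n0 x = 0"
    and div_u_n0: "\<forall>x. dive un0 x = 0"
    and stages: "\<forall>\<^sub>F \<epsilon> in at_right 0.
       (\<forall>k\<in>{1..s}. periodic_torus (rho \<epsilon> k) \<and> periodic_torus (q \<epsilon> k) \<and> (\<forall>x. rho \<epsilon> k x > 0)) \<and>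
       (\<forall>k\<in>{1..s}. \<forall>x. rho \<epsilon> k x =
           (\<rho>n0 x + \<epsilon>\<^sup>2 * \<rho>n2 x) - \<Delta>t * (\<Sum>l\<in>{1..k}. A k l * dive (q \<epsilon> l) x)) \<and>
       (\<forall>k\<in>{1..s}. \<forall>x. q \<epsilon> k x =
           (\<rho>n0 x + \<epsilon>\<^sup>2 * \<rho>n2 x) *\<^sub>R (un0 x + \<epsilon> *\<^sub>R un1 x)
           - \<Delta>t *\<^sub>R (\<Sum>l\<in>{1..k-1}. At k l *\<^sub>R
                divT (\<lambda>y i j. otimes (q \<epsilon> l y) (q \<epsilon> l y) i j / rho \<epsilon> l y) x)
           - (\<Delta>t / \<epsilon>\<^sup>2) *\<^sub>R (\<Sum>l\<in>{1..k}. A k l *\<^sub>R grad (\<lambda>y. pres \<gamma> (rho \<epsilon> l y)) x))"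
    and update: "\<forall>\<^sub>F \<epsilon> in at_right 0.
       (\<forall>x. rhoN \<epsilon> x =
           (\<rho>n0 x + \<epsilon>\<^sup>2 * \<rho>n2 x) - \<Delta>t * (\<Sum>k\<in>{1..s}. w k * dive (q \<epsilon> k) x)) \<and>
       (\<forall>x. qN \<epsilon> x =
           (\<rho>n0 x + \<epsilon>\<^sup>2 * \<rho>n2 x) *\<^sub>R (un0 x + \<epsilon> *\<^sub>R un1 x)
           - \<Delta>t *\<^sub>R (\<Sum>k\<in>{1..s}. wt k *\<^sub>R
                divT (\<lambda>y i j. otimes (q \<epsilon> k y) (q \<epsilon> k y) i j / rho \<epsilon> k y) x)
           - (\<Delta>t / \<epsilon>\<^sup>2) *\<^sub>R (\<Sum>k\<in>{1..s}. w k *\<^sub>R grad (\<lambda>y. pres \<gamma> (rho \<epsilon> k y)) x))"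
    and coeff_smooth: "\<forall>k\<in>{1..s}. smooth_fun (rho0 k) \<and> smooth_fun (rho1 k) \<and> smooth_fun (rho2 k)
        \<and> smooth_fun (u0 k) \<and> smooth_fun (u1 k) \<and> smooth_fun (u2 k)"
    and coeff_periodic: "\<forall>k\<in>{1..s}. periodic_torus (rho0 k) \<and> periodic_torus (rho1 k) \<and> periodic_torus (rho2 k)
        \<and> periodic_torus (u0 k) \<and> periodic_torus (u1 k) \<and> periodic_torus (u2 k)"
    and exp_rho: "\<forall>k\<in>{1..s}. expansion (\<lambda>\<epsilon>. rho \<epsilon> k) (rho0 k) (rho1 k) (rho2 k)"
    and exp_u: "\<forall>k\<in>{1..s}. expansion (\<lambda>\<epsilon> x. (1 / rho \<epsilon> k x) *\<^sub>R q \<epsilon> k x) (u0 k) (u1 k) (u2 k)"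
  shows "(\<forall>k\<in>{1..s}. (\<forall>x. rho0 k x = \<rho>n0 x) \<and> (\<exists>c. \<forall>x. rho1 k x = c) \<and> (\<forall>x. dive (u0 k) x = 0))
     \<and> (\<forall>\<^sub>F \<epsilon> in at_right 0. rhoN \<epsilon> = rho \<epsilon> s \<and> qN \<epsilon> = q \<epsilon> s)
     \<and> (\<exists>c. \<forall>x. rho0 s x = c) \<and> (\<forall>x. rho0 s x = \<rho>n0 x) \<and> (\<forall>x. dive (u0 s) x = 0)
     \<and> (\<forall>x. u0 s x = un0 x
            - \<Delta>t *\<^sub>R (\<Sum>k\<in>{1..s}. wt k *\<^sub>R divT (\<lambda>y. otimes (u0 k y) (u0 k y)) x)
            - (\<Delta>t / \<rho>n0 x) *\<^sub>R (\<Sum>k\<in>{1..s}. w k *\<^sub>R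
                 grad (\<lambda>y. pres2 \<gamma> (rho0 k y) (rho1 k y) (rho2 k y)) x))"
proof -
  have s: "s \<in> {1..s}" using scheme by (simp add: DIRK_IMEX_def)
  have "\<forall>\<^sub>F \<epsilon> in at_right 0. \<forall>k\<in>{1..s}. \<forall>x. rho \<epsilon> k x > 0"
    and "\<forall>\<^sub>F \<epsilon> in at_right 0. \<forall>k\<in>{1..s}. \<forall>x. rho \<epsilon> k x =
           (\<rho>n0 x + \<epsilon>\<^sup>2 * \<rho>n2 x) - \<Delta>t * (\<Sum>l\<in>{1..k}. A k l * dive (q \<epsilon> l) x)"
    and "\<forall>\<^sub>F \<epsilon> in at_right 0. \<forall>k\<in>{1..s}. \<forall>x. q \<epsilon> k x =
           (\<rho>n0 x + \<epsilon>\<^sup>2 * \<rho>n2 x) *\<^sub>R (un0 x + \<epsilon> *\<^sub>R un1 x)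
           - \<Delta>t *\<^sub>R (\<Sum>l\<in>{1..k-1}. At k l *\<^sub>R
                divT (\<lambda>y i j. otimes (q \<epsilon> l y) (q \<epsilon> l y) i j / rho \<epsilon> l y) x)
           - (\<Delta>t / \<epsilon>\<^sup>2) *\<^sub>R (\<Sum>l\<in>{1..k}. A k l *\<^sub>R grad (\<lambda>y. pres \<gamma> (rho \<epsilon> l y)) x)"
    using stages by (auto elim: eventually_mono)
  then interpret isentropic_imex_stages \<gamma> \<Delta>t s At A \<rho>n0 \<rho>n2 un0 un1 rho q rho0 rho1 rho2 u0 u1 u2
    using gamma_pos dt_pos scheme scheme_type data_smooth(1,2) rho_n0_pos grad_rho_n0 div_u_n0
      coeff_smooth coeff_periodic exp_rho exp_u
    by unfold_locales auto
  have last_stage: "\<forall>\<^sub>F \<epsilon> in at_right 0. rhoN \<epsilon> = rho \<epsilon> s \<and> qN \<epsilon> = q \<epsilon> s"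
    using update stage_rho stage_q
  proof eventually_elim
    case (elim \<epsilon>)
    have "rhoN \<epsilon> x = rho \<epsilon> s x" for x
      using elim(1) elim(2)[rule_format, OF s, of x]
      by (simp only: GSA_implicit_sum[OF gsa, where 'a = real, unfolded real_scaleR_def])
    moreover have "qN \<epsilon> x = q \<epsilon> s x" for x
      using elim(1) elim(3)[rule_format, OF s, of x]
      by (simp only: GSA_implicit_sum[OF gsa] GSA_explicit_sum[OF scheme gsa])
    ultimately show ?case by auto
  qed
  have stage_limits: "(\<forall>x. rho0 k x = \<rho>n0 x) \<and> (\<exists>c. \<forall>x. rho1 k x = c) \<and> (\<forall>x. dive (u0 k) x = 0)"
    if k: "k \<in> {1..s}" for k
    using rho0_eq_rho_bar[OF k] rho_n0_eq rho1_const[OF k] div_u0_zero[OF k] by auto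
  have "u0 s x = un0 x - \<Delta>t *\<^sub>R (\<Sum>k\<in>{1..s}. wt k *\<^sub>R divT (\<lambda>y. otimes (u0 k y) (u0 k y)) x)
      - (\<Delta>t / \<rho>n0 x) *\<^sub>R (\<Sum>k\<in>{1..s}. w k *\<^sub>R grad (\<lambda>y. pres2 \<gamma> (rho0 k y) (rho1 k y) (rho2 k y)) x)"
    for x
    using leading_velocity_update[of x]
    by (simp only: GSA_implicit_sum[OF gsa] GSA_explicit_sum[OF scheme gsa] rho_n0_eq)
  then show ?thesis
    using stage_limits last_stage stage_limits[OF s] rho0_eq_rho_bar[OF s] by blast
qed

end
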